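(* Let $d\ge1$, $\beta>0$, $\theta:[0,\infty)\to[0,\infty)$ continuous with $\theta(x)>0$ for $x>0$ and $h_\pm<\infty$; $\mu>0$ for bosons, $\mu\in\mathbb{R}$ for fermions. Let $\vec K^L\sim\mathcal{P}^L_\pm$ independently over $L$. For any $\epsilon>0$, almost surely $$\lim_{L\to\infty}\frac{1}{L^d}\#\Big\{\vec u\in B_{\vec1}(L): R^L_{\vec u}(\vec K^L)\le\Big(\frac{\log L\,(1-\epsilon)}{E^L_{\vec u}}\Big)^{1/d}\Big\}=0.$$
   Context: Put $q_{\vec n}^L=e^{-\beta(\theta(\|\vec n\|/L)+\mu)}$. Bosons: under $\mathcal{P}^L_+$ the $K_{\vec n}$, $\vec n\in\mathbb{Z}^d$, are independent with $\mathbb{P}(K_{\vec n}=k)=(1-q^L_{\vec n})(q^L_{\vec n})^k$, $k\ge0$. Fermions: independent $\{0,1\}$-valued with $\mathbb{P}(K_{\vec n}=1)=q^L_{\vec n}/(1+q^L_{\vec n})$. $h_\pm=\int_{\mathbb{R}^d}\big(\mp\log(1\mp e^{-\beta(\theta(\|\vec y\|)+\mu)})+\beta(\theta(\|\vec y\|)+\mu)\frac{e^{-\beta(\theta(\|\vec y\|)+\mu)}}{1\mp e^{-\beta(\theta(\|\vec y\|)+\mu)}}\big)d\vec y$. $E^L_{\vec u}$ is the Shannon entropy (natural log) of $K_{\vec u}$ under $\mathcal{P}^L_\pm$. $B_{\vec u}(s)=\{\vec n\in\mathbb{Z}^d:u_i\le n_i\le u_i+s-1\ \forall i\}$, $\vec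 k_{\vec u}(s)=(k_{\vec n})_{\vec n\in B_{\vec u}(s)}$, $R^L_{\vec u}(\vec k)=\inf\{s\ge1:\vec k_{\vec u}(s)\ne\vec k_{\vec v}(s)\ \forall\vec v\ne\vec u,\ \vec v\in B_{\vec1}(L)\}$. *)

theory Defs
  imports "HOL-Probability.Probability"
begin

text \<open>Lattice points of Z^d are \<open>int ^ 'd\<close>; d = CARD('d).\<close>

definition lat_norm :: "int ^ 'd \<Rightarrow> real" where
  "lat_norm n = norm ((\<chi> i. real_of_int (n $ i)) :: real ^ 'd)"

definition qpar :: "real \<Rightarrow> (real \<Rightarrow> real) \<Rightarrow> real \<Rightarrow> nat \<Rightarrow> int ^ 'd \<Rightarrow> real" where
  "qpar \<beta> \<theta> \<mu> L n = exp (- \<beta> * (\<theta> (lat_norm n / real L) + \<mu>))"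

text \<open>Law of a single occupation number K_n under P^L_+ (bos = True) or P^L_- (bos = False).\<close>
definition Kdist :: "bool \<Rightarrow> real \<Rightarrow> (real \<Rightarrow> real) \<Rightarrow> real \<Rightarrow> nat \<Rightarrow> int ^ 'd \<Rightarrow> nat pmf" where
  "Kdist bos \<beta> \<theta> \<mu> L n =
     (let q = qpar \<beta> \<theta> \<mu> L n in
      if bos then geometric_pmf (1 - q)
      else map_pmf (\<lambda>b. if b then 1 else 0) (bernoulli_pmf (q / (1 + q))))"

definition entropy_nat :: "nat pmf \<Rightarrow> real" where
  "entropy_nat p = (\<Sum>k. - (pmf p k * ln (pmf p k)))"

definition Ent :: "bool \<Rightarrow> real \<Rightarrow> (real \<Rightarrow> real) \<Rightarrow> real \<Rightarrow> nat \<Rightarrow> int ^ 'd \<Rightarrow> real" where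
  "Ent bos \<beta> \<theta> \<mu> L u = entropy_nat (Kdist bos \<beta> \<theta> \<mu> L u)"

text \<open>Integrand of h_+ (bos) / h_- (not bos), as a function of r = ||y||.\<close>
definition hdens :: "bool \<Rightarrow> real \<Rightarrow> (real \<Rightarrow> real) \<Rightarrow> real \<Rightarrow> real \<Rightarrow> real" where
  "hdens bos \<beta> \<theta> \<mu> r =
     (let x = \<beta> * (\<theta> r + \<mu>) in
      if bos then - ln (1 - exp (- x)) + x * exp (- x) / (1 - exp (- x))
      else ln (1 + exp (- x)) + x * exp (- x) / (1 + exp (- x)))"

definition Box :: "int ^ 'd \<Rightarrow> nat \<Rightarrow> (int ^ 'd) set" where
  "Box u s = {n. \<forall>i. u $ i \<le> n $ i \<and> n $ i \<le> u $ i + int s - 1}"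

definition pat_differ :: "(int ^ 'd \<Rightarrow> nat) \<Rightarrow> int ^ 'd \<Rightarrow> int ^ 'd \<Rightarrow> nat \<Rightarrow> bool" where
  "pat_differ k u v s \<longleftrightarrow> (\<exists>j \<in> Box 0 s. k (u + j) \<noteq> k (v + j))"

definition Rrec :: "nat \<Rightarrow> int ^ 'd \<Rightarrow> (int ^ 'd \<Rightarrow> nat) \<Rightarrow> ereal" where
  "Rrec L u k =
     (let S = {s::nat. s \<ge> 1 \<and> (\<forall>v \<in> Box 1 L. v \<noteq> u \<longrightarrow> pat_differ k u v s)} in
      if S = {} then \<infinity> else ereal (real (LEAST s. s \<in> S)))"

text \<open>Joint law: the fields K^L (L \<in> nat) are independent, each a product law over Z^d.\<close>
definition Pmodel :: "bool \<Rightarrow> real \<Rightarrow> (real \<Rightarrow> real) \<Rightarrow> real \<Rightarrow> (nat \<times> (int ^ 'd) \<Rightarrow> nat) measure" where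
  "Pmodel bos \<beta> \<theta> \<mu> = PiM UNIV (\<lambda>(L, n). measure_pmf (Kdist bos \<beta> \<theta> \<mu> L n))"

end

theory Submission
  imports Defs "HOL-Real_Asymp.Real_Asymp"
begin

text \<open>
  If R_u <= t_u = (ln L (1 - eps) / E_u)^(1/d), then the block of occupation numbers of side
  s_u = floor t_u at u, its pattern, occurs nowhere else in B_1(L). Group these sites by s_u and
  by the cell of a fine partition of the radius |u|/L, and let c be the parameter q at that cell.
  Within a group the patterns are pairwise distinct, so their probabilities under the product law
  with parameter c sum to at most one. Call a site typical if its pattern has probability at
  least L^-(1 - eps/4) under that law: each of the O(log L) groups contains at most
  L^(1 - eps/4) typical sites, which is o(L^d). For an atypical site the surprisal of the pattern
  exceeds (1 - eps/4) ln L, while by continuity of the cross entropy its mean is at most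
  (1 - eps/2) ln L and its variance is O(ln L); by Chebyshev this has probability O(1/ln L).
  Atypicality of sites in one residue class modulo the maximal pattern size depends on disjoint
  sets of occupation numbers, so Hoeffding's inequality in each class and Borel-Cantelli show
  that almost surely the number of atypical sites eventually exceeds its mean by at most o(L^d).
\<close>

section \<open>Boxes, patterns and recurrence radii\<close>

lemma bij_betw_Box_PiE:
  "bij_betw (\<lambda>f. \<chi> i. f i) (PiE UNIV (\<lambda>i. {u$i..u$i + int s - 1})) (Box u s)"
proof (rule bij_betwI')
  fix f g
  assume "f \<in> PiE UNIV (\<lambda>i. {u$i..u$i + int s - 1})" "g \<in> PiE UNIV (\<lambda>i. {u$i..u$i + int s - 1})"
  then show "((\<chi> i. f i) = (\<chi> i. g i)) = (f = g)"
    by (auto simp: vec_eq_iff fun_eq_iff)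
next
  fix f assume "f \<in> PiE UNIV (\<lambda>i. {u$i..u$i + int s - 1})"
  then show "(\<chi> i. f i) \<in> Box u s" by (auto simp: Box_def PiE_def Pi_def)
next
  fix n assume "n \<in> Box u s"
  then show "\<exists>f\<in>PiE UNIV (\<lambda>i. {u$i..u$i + int s - 1}). n = (\<chi> i. f i)"
    by (intro bexI[of _ "\<lambda>i. n $ i"]) (auto simp: Box_def vec_eq_iff)
qed

lemma finite_Box [simp]: "finite (Box u s)"
  using bij_betw_finite[OF bij_betw_Box_PiE[of u s]] by (simp add: finite_PiE)

lemma card_Box: "card (Box (u::int^'d) s) = s ^ CARD('d)"
proof -
  have "card (Box u s) = card (PiE (UNIV::'d set) (\<lambda>i. {u$i..u$i + int s - 1}))"
    using bij_betw_same_card[OF bij_betw_Box_PiE[of u s]] by simp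
  also have "\<dots> = (\<Prod>i\<in>(UNIV::'d set). s)"
    by (simp add: card_PiE)
  finally show ?thesis by simp
qed

lemma Box_mono: "s \<le> s' \<Longrightarrow> Box u s \<subseteq> Box u s'"
  by (auto simp: Box_def) (smt (verit) of_nat_le_iff)

lemma pat_differ_mono: "pat_differ k u v s \<Longrightarrow> s \<le> s' \<Longrightarrow> pat_differ k u v s'"
  unfolding pat_differ_def using Box_mono by blast

lemma Rrec_le_imp_unique_pattern:
  assumes "Rrec L u k \<le> ereal t"
  shows "1 \<le> t" "\<forall>v\<in>Box 1 L. v \<noteq> u \<longrightarrow> pat_differ k u v (nat \<lfloor>t\<rfloor>)"
proof -
  define S where "S = {s::nat. s \<ge> 1 \<and> (\<forall>v \<in> Box 1 L. v \<noteq> u \<longrightarrow> pat_differ k u v s)}"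
  have R: "Rrec L u k = (if S = {} then \<infinity> else ereal (real (Least (\<lambda>s. s \<in> S))))"
    unfolding Rrec_def S_def Let_def by simp
  have "S \<noteq> {}"
  proof
    assume "S = {}"
    with R assms show False by simp
  qed
  then have s: "Least (\<lambda>s. s \<in> S) \<in> S" by (auto intro: LeastI)
  from \<open>S \<noteq> {}\<close> R assms have le: "real (Least (\<lambda>s. s \<in> S)) \<le> t" by simp
  with s show "1 \<le> t" unfolding S_def by simp
  from le have "Least (\<lambda>s. s \<in> S) \<le> nat \<lfloor>t\<rfloor>" by linarith
  with s show "\<forall>v\<in>Box 1 L. v \<noteq> u \<longrightarrow> pat_differ k u v (nat \<lfloor>t\<rfloor>)"
    unfolding S_def using pat_differ_mono by blast
qed

lemma lat_norm_nonneg: "0 \<le> lat_norm n"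
  by (simp add: lat_norm_def)

lemma lat_norm_le:
  assumes "\<And>i. \<bar>n $ i\<bar> \<le> M"
  shows "lat_norm (n::int^'d) \<le> real CARD('d) * M"
proof -
  have "lat_norm n \<le> (\<Sum>i\<in>UNIV. \<bar>real_of_int (n$i)\<bar>)"
    unfolding lat_norm_def using norm_le_l1_cart[of "(\<chi> i. real_of_int (n $ i)) :: real^'d"] by simp
  also have "\<dots> \<le> (\<Sum>i\<in>(UNIV::'d set). real_of_int M)"
    by (intro sum_mono) (metis assms of_int_abs of_int_le_iff)
  finally show ?thesis by simp
qed

lemma lat_norm_diff_le: "\<bar>lat_norm (n::int^'d) - lat_norm m\<bar> \<le> lat_norm (n - m)"
proof -
  have "(\<chi> i. real_of_int ((n - m) $ i)) = ((\<chi> i. real_of_int (n $ i)) - (\<chi> i. real_of_int (m $ i)) :: real^'d)"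
    by (simp add: vec_eq_iff)
  then show ?thesis unfolding lat_norm_def by (simp add: norm_triangle_ineq3)
qed

section \<open>Counting by probability weights\<close>

lemma sum_prod_pmf_le_1:
  fixes p :: "nat pmf" and F :: "('j \<Rightarrow> nat) set"
  assumes "finite J" "finite F" "F \<subseteq> extensional J"
  shows "(\<Sum>x\<in>F. \<Prod>j\<in>J. pmf p (x j)) \<le> 1"
proof -
  define M where "M = Max (insert 0 ((\<lambda>(x, j). x j) ` (F \<times> J)))"
  have sub: "F \<subseteq> PiE J (\<lambda>_. {..M})"
  proof
    fix x assume x: "x \<in> F"
    have "x j \<le> M" if "j \<in> J" for j
      unfolding M_def using x that assms by (intro Max_ge) force+
    then show "x \<in> PiE J (\<lambda>_. {..M})" using x assms(3) by (auto simp: PiE_def)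
  qed
  have "(\<Sum>x\<in>F. \<Prod>j\<in>J. pmf p (x j)) \<le> (\<Sum>x\<in>PiE J (\<lambda>_. {..M}). \<Prod>j\<in>J. pmf p (x j))"
    by (rule sum_mono2) (use sub assms in \<open>auto simp: finite_PiE prod_nonneg\<close>)
  also have "\<dots> = (\<Prod>j\<in>J. \<Sum>k\<in>{..M}. pmf p k)"
    by (subst prod_sum_PiE) (use assms in auto)
  also have "\<dots> = (\<Prod>j\<in>J. measure_pmf.prob p {..M})"
    by (simp add: measure_measure_pmf_finite)
  also have "\<dots> \<le> 1"
    by (intro prod_le_1) auto
  finally show ?thesis .
qed

lemma card_le_card_keys_div_weight:
  fixes key :: "'u \<Rightarrow> 'k" and pat :: "'u \<Rightarrow> 'x"
  assumes "finite U" "finite K" "inj_on (\<lambda>u. (key u, pat u)) U" "\<And>u. u \<in> U \<Longrightarrow> key u \<in> K"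
    and "\<And>u. u \<in> U \<Longrightarrow> Q (key u) (pat u) \<ge> \<tau>" "\<tau> > 0"
    and "\<And>k G. k \<in> K \<Longrightarrow> finite G \<Longrightarrow> G \<subseteq> pat ` {u\<in>U. key u = k} \<Longrightarrow> (\<Sum>x\<in>G. Q k x) \<le> 1"
  shows "real (card U) \<le> real (card K) / \<tau>"
proof -
  have "card U \<le> (\<Sum>k\<in>K. card {u\<in>U. key u = k})"
  proof -
    have "U = (\<Union>k\<in>K. {u\<in>U. key u = k})" using assms(4) by blast
    then show ?thesis using card_UN_le[OF assms(2), of "\<lambda>k. {u\<in>U. key u = k}"] by simp
  qed
  then have "real (card U) \<le> (\<Sum>k\<in>K. real (card {u\<in>U. key u = k}))"
    by (simp flip: of_nat_sum)
  also have "\<dots> \<le> (\<Sum>k\<in>K. 1 / \<tau>)"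
  proof (rule sum_mono)
    fix k assume k: "k \<in> K"
    let ?Uk = "{u\<in>U. key u = k}"
    have inj: "inj_on pat ?Uk"
      using assms(3) unfolding inj_on_def by blast
    have "real (card ?Uk) * \<tau> = (\<Sum>u\<in>?Uk. \<tau>)" by simp
    also have "\<dots> \<le> (\<Sum>u\<in>?Uk. Q k (pat u))"
      by (rule sum_mono) (use assms(5) in auto)
    also have "\<dots> = (\<Sum>x\<in>pat ` ?Uk. Q k x)"
      by (rule sum.reindex[OF inj, symmetric, unfolded comp_def])
    also have "\<dots> \<le> 1"
      by (rule assms(7)[OF k]) (use assms(1) in auto)
    finally show "real (card ?Uk) \<le> 1 / \<tau>"
      using assms(6) by (simp add: field_simps)
  qed
  finally show ?thesis by simp
qed

section \<open>The law of a single occupation number\<close>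

definition occ_pmf :: "bool \<Rightarrow> real \<Rightarrow> nat pmf" where
  "occ_pmf bos q = (if bos then geometric_pmf (1 - q)
     else map_pmf (\<lambda>b. if b then 1 else 0) (bernoulli_pmf (q / (1 + q))))"

definition occ_param :: "bool \<Rightarrow> real \<Rightarrow> bool" where
  "occ_param bos q \<longleftrightarrow> 0 < q \<and> (bos \<longrightarrow> q < 1)"

definition occ_support :: "bool \<Rightarrow> nat \<Rightarrow> bool" where
  "occ_support bos k \<longleftrightarrow> bos \<or> k \<le> 1"

definition log_partition :: "bool \<Rightarrow> real \<Rightarrow> real" where
  "log_partition bos q = (if bos then - ln (1 - q) else ln (1 + q))"

definition surprisal :: "bool \<Rightarrow> real \<Rightarrow> nat \<Rightarrow> real" where
  "surprisal bos q k = log_partition bos q - ln q * real k"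

definition occ_mean :: "bool \<Rightarrow> real \<Rightarrow> real" where
  "occ_mean bos q = (if bos then q / (1 - q) else q / (1 + q))"

definition occ_sq_bound :: "bool \<Rightarrow> real \<Rightarrow> real" where
  "occ_sq_bound bos q = (if bos then (1 + q) / (1 - q)^2 else 1)"

text \<open>The mean of the surprisal under parameter c of an occupation number with parameter q.\<close>

definition cross_entropy :: "bool \<Rightarrow> real \<Rightarrow> real \<Rightarrow> real" where
  "cross_entropy bos q c = log_partition bos c - ln c * occ_mean bos q"

lemma Kdist_eq_occ_pmf: "Kdist bos \<beta> \<theta> \<mu> L n = occ_pmf bos (qpar \<beta> \<theta> \<mu> L n)"
  by (simp add: Kdist_def occ_pmf_def Let_def)

lemma pmf_map_bernoulli_indicator:
  fixes k :: nat
  assumes "0 \<le> p" "p \<le> 1"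
  shows "pmf (map_pmf (\<lambda>b. if b then 1 else 0) (bernoulli_pmf p)) k =
     (if k = 0 then 1 - p else if k = 1 then p else (0::real))"
proof -
  consider "k = 0" | "k = 1" | "k \<noteq> 0" "k \<noteq> 1" by blast
  then have "(\<lambda>b. if b then 1 else (0::nat)) -` {k} = (if k = 0 then {False} else if k = 1 then {True} else {})"
    by cases (auto simp: set_eq_iff split: if_splits)
  then show ?thesis
    using assms by (simp add: pmf_map measure_pmf_single)
qed

lemma pmf_occ_pmf:
  assumes "occ_param bos q"
  shows "pmf (occ_pmf bos q) k = (if occ_support bos k then exp (- surprisal bos q k) else 0)"
proof (cases bos)
  case True
  then have q: "0 < q" "q < 1" using assms by (auto simp: occ_param_def)
  have "exp (- surprisal bos q k) = exp (ln (1 - q)) * exp (ln q * real k)"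
    using True by (simp add: surprisal_def log_partition_def exp_add[symmetric] algebra_simps)
  also have "\<dots> = (1 - q) * q ^ k"
    using q by (simp add: exp_of_nat2_mult)
  finally show ?thesis using True q by (simp add: occ_pmf_def occ_support_def mult.commute)
next
  case False
  then have q: "0 < q" using assms by (auto simp: occ_param_def)
  have "exp (- surprisal bos q 0) = 1 - q / (1 + q)"
    using False q by (simp add: surprisal_def log_partition_def exp_minus field_simps)
  moreover have "exp (- surprisal bos q 1) = q / (1 + q)"
    using False q by (simp add: surprisal_def log_partition_def exp_diff)
  ultimately show ?thesis using False q
    by (cases "k = 0"; cases "k = 1") (auto simp: occ_pmf_def pmf_map_bernoulli_indicator occ_support_def)
qed

lemma measure_occ_pmf_not_support:
  "occ_param bos q \<Longrightarrow> measure_pmf.prob (occ_pmf bos q) {k. \<not> occ_support bos k} = 0"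
  by (subst measure_pmf_zero_iff) (auto simp: set_pmf_eq pmf_occ_pmf)

lemma sums_Suc_squared_times_power:
  fixes c :: real assumes "\<bar>c\<bar> < 1"
  shows "(\<lambda>n. (real n + 1)^2 * c ^ n) sums ((1 + c) / (1 - c)^3)"
proof -
  have s: "(\<lambda>n. real n * z ^ n) sums (z / (1 - z)\<^sup>2)" if "norm z < 1" for z :: real
    using geometric_sums_times_n[of z] that by (simp add: mult.commute)
  have nz: "1 - c \<noteq> 0" using assms by auto
  then have "((\<lambda>z. z / (1 - z)\<^sup>2) has_field_derivative ((1 * (1 - c)\<^sup>2 - c * (2 * (1 - c) * (-1))) / ((1 - c)\<^sup>2)\<^sup>2)) (at c)"
    by (auto intro!: derivative_eq_intros)
  moreover have "(1 * (1 - c)\<^sup>2 - c * (2 * (1 - c) * (-1))) / ((1 - c)\<^sup>2)\<^sup>2 = ((1 + c) * (1 - c)) / ((1 - c)^3 * (1 - c))"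
    by (simp add: power2_eq_square power3_eq_cube algebra_simps)
  ultimately have d: "((\<lambda>z. z / (1 - z)\<^sup>2) has_field_derivative ((1 + c) / (1 - c)^3)) (at c)"
    using nz by simp
  have "(\<lambda>n. diffs (\<lambda>n. real n) n * c ^ n) sums ((1 + c) / (1 - c)^3)"
    by (rule termdiffs_sums_strong[of 1 "\<lambda>n. real n" "\<lambda>z. z / (1 - z)\<^sup>2", OF s d]) (use assms in auto)
  then show ?thesis by (simp add: diffs_def power2_eq_square algebra_simps)
qed

lemma integrable_measure_pmf_nat_iff:
  fixes p :: "nat pmf" and f :: "nat \<Rightarrow> real"
  shows "integrable (measure_pmf p) f \<longleftrightarrow> summable (\<lambda>n. pmf p n * \<bar>f n\<bar>)"
  unfolding measure_pmf_eq_density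
  by (subst integrable_density) (auto simp: integrable_count_space_nat_iff abs_mult)

lemma integral_measure_pmf_nat:
  fixes p :: "nat pmf" and f :: "nat \<Rightarrow> real"
  assumes "integrable (measure_pmf p) f"
  shows "measure_pmf.expectation p f = (\<Sum>n. pmf p n * f n)"
proof -
  have "integrable (count_space UNIV) (\<lambda>n. pmf p n * f n)"
    using assms unfolding integrable_measure_pmf_nat_iff integrable_count_space_nat_iff
    by (simp add: abs_mult)
  moreover have "measure_pmf.expectation p f = (\<integral>n. pmf p n * f n \<partial>count_space UNIV)"
    unfolding measure_pmf_eq_density by (subst integral_density) auto
  ultimately show ?thesis by (simp add: integral_count_space_nat)
qed

lemma occ_pmf_mean:
  assumes "occ_param bos q"
  shows "integrable (measure_pmf (occ_pmf bos q)) real"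
    "measure_pmf.expectation (occ_pmf bos q) real = occ_mean bos q"
proof -
  have "integrable (measure_pmf (occ_pmf bos q)) real \<and>
        measure_pmf.expectation (occ_pmf bos q) real = occ_mean bos q"
  proof (cases bos)
    case True
    then have q: "0 < q" "q < 1" using assms by (auto simp: occ_param_def)
    then show ?thesis
      using True integrable_real_geometric_pmf[of "1 - q"] expectation_geometric_pmf[of "1 - q"]
      by (simp add: occ_pmf_def occ_mean_def)
  next
    case False
    then have "0 \<le> q / (1 + q)" "q / (1 + q) \<le> 1" using assms by (auto simp: occ_param_def)
    then show ?thesis using False
      by (simp add: occ_pmf_def occ_mean_def integrable_measure_pmf_finite
          integral_map_pmf integral_bernoulli_pmf)
  qed
  then show "integrable (measure_pmf (occ_pmf bos q)) real"
    "measure_pmf.expectation (occ_pmf bos q) real = occ_mean bos q"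
    by auto
qed

lemma occ_pmf_second_moment:
  assumes "occ_param bos q"
  shows "integrable (measure_pmf (occ_pmf bos q)) (\<lambda>k. (real k)\<^sup>2)"
    "measure_pmf.expectation (occ_pmf bos q) (\<lambda>k. (real k)\<^sup>2) \<le> occ_sq_bound bos q"
proof -
  have "integrable (measure_pmf (occ_pmf bos q)) (\<lambda>k. (real k)\<^sup>2) \<and>
        measure_pmf.expectation (occ_pmf bos q) (\<lambda>k. (real k)\<^sup>2) \<le> occ_sq_bound bos q"
  proof (cases bos)
    case True
    then have q: "0 < q" "q < 1" using assms by (auto simp: occ_param_def)
    have S: "(\<lambda>n. (1 - q) * ((real n + 1)^2 * q ^ n)) sums ((1 - q) * ((1 + q) / (1 - q)^3))"
      by (intro sums_mult sums_Suc_squared_times_power) (use q in auto)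
    have le: "pmf (occ_pmf bos q) n * (real n)\<^sup>2 \<le> (1 - q) * ((real n + 1)^2 * q ^ n)" for n
      using True q by (simp add: occ_pmf_def power_mono mult_left_mono mult_right_mono)
    have sm: "summable (\<lambda>n. pmf (occ_pmf bos q) n * (real n)\<^sup>2)"
      by (rule summable_comparison_test[OF _ sums_summable[OF S]]) (use le in auto)
    then have int: "integrable (measure_pmf (occ_pmf bos q)) (\<lambda>k. (real k)\<^sup>2)"
      by (simp add: integrable_measure_pmf_nat_iff)
    have "measure_pmf.expectation (occ_pmf bos q) (\<lambda>k. (real k)\<^sup>2)
          \<le> (\<Sum>n. (1 - q) * ((real n + 1)^2 * q ^ n))"
      unfolding integral_measure_pmf_nat[OF int] by (rule suminf_le[OF le sm sums_summable[OF S]])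
    also have "\<dots> = (1 - q) * ((1 + q) / ((1 - q) * (1 - q)\<^sup>2))"
      using S by (simp add: sums_iff power2_eq_square power3_eq_cube)
    also have "\<dots> = occ_sq_bound bos q"
      using q True by (simp add: occ_sq_bound_def)
    finally show ?thesis using int by simp
  next
    case False
    then have "0 \<le> q / (1 + q)" "q / (1 + q) \<le> 1" using assms by (auto simp: occ_param_def)
    then show ?thesis using False
      by (simp add: occ_pmf_def occ_sq_bound_def integrable_measure_pmf_finite
          integral_map_pmf integral_bernoulli_pmf)
  qed
  then show "integrable (measure_pmf (occ_pmf bos q)) (\<lambda>k. (real k)\<^sup>2)"
    "measure_pmf.expectation (occ_pmf bos q) (\<lambda>k. (real k)\<^sup>2) \<le> occ_sq_bound bos q"
    by auto
qed

lemma entropy_occ_pmf: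
  assumes "occ_param bos q"
  shows "entropy_nat (occ_pmf bos q) = cross_entropy bos q q"
proof -
  let ?p = "occ_pmf bos q"
  have summand: "- (pmf ?p k * ln (pmf ?p k)) = pmf ?p k * surprisal bos q k" for k
    using assms by (simp add: pmf_occ_pmf)
  have int: "integrable (measure_pmf ?p) (surprisal bos q)"
    using occ_pmf_mean(1)[OF assms] unfolding surprisal_def by auto
  have "entropy_nat ?p = measure_pmf.expectation ?p (surprisal bos q)"
    unfolding entropy_nat_def summand by (rule integral_measure_pmf_nat[OF int, symmetric])
  also have "\<dots> = measure_pmf.expectation ?p (\<lambda>k. log_partition bos q)
      - measure_pmf.expectation ?p (\<lambda>k. ln q * real k)"
    unfolding surprisal_def using occ_pmf_mean(1)[OF assms]
    by (intro Bochner_Integration.integral_diff) auto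
  also have "\<dots> = cross_entropy bos q q"
    using occ_pmf_mean(2)[OF assms]
    by (simp add: cross_entropy_def prob_space.prob_space[OF prob_space_measure_pmf])
  finally show ?thesis .
qed

lemma cross_entropy_pos:
  assumes "occ_param bos q"
  shows "cross_entropy bos q q > 0"
proof (cases bos)
  case True
  then have q: "0 < q" "q < 1" using assms by (auto simp: occ_param_def)
  then have "log_partition bos q > 0" "- ln q > 0" "occ_mean bos q > 0"
    using True by (simp_all add: log_partition_def occ_mean_def)
  then show ?thesis
    using mult_neg_pos[of "ln q" "occ_mean bos q"] by (simp add: cross_entropy_def)
next
  case False
  then have q: "0 < q" using assms by (auto simp: occ_param_def)
  have "ln q * (q / (1 + q)) < ln (1 + q)"
  proof (cases "q \<le> 1")
    case True
    then have "ln q * (q / (1 + q)) \<le> 0"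
      using q by (intro mult_nonpos_nonneg) simp_all
    moreover have "0 < ln (1 + q)" using q by simp
    ultimately show ?thesis by linarith
  next
    case False
    then have "ln q * (q / (1 + q)) < ln q * 1"
      using q by (intro mult_strict_left_mono) simp_all
    also have "\<dots> < ln (1 + q)" using q by simp
    finally show ?thesis .
  qed
  then show ?thesis using False by (simp add: cross_entropy_def log_partition_def occ_mean_def)
qed

lemma occ_pmf_centered_moments:
  fixes b :: real
  assumes "occ_param bos q"
  defines "X \<equiv> \<lambda>k. b * (real k - occ_mean bos q)"
  shows "integrable (measure_pmf (occ_pmf bos q)) X"
    "measure_pmf.expectation (occ_pmf bos q) X = 0"
    "integrable (measure_pmf (occ_pmf bos q)) (\<lambda>k. (X k)\<^sup>2)"
    "measure_pmf.expectation (occ_pmf bos q) (\<lambda>k. (X k)\<^sup>2) \<le> b\<^sup>2 * occ_sq_bound bos q"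
proof -
  note m1 = occ_pmf_mean[OF assms(1)] and m2 = occ_pmf_second_moment[OF assms(1)]
  note one = prob_space.prob_space[OF prob_space_measure_pmf]
  show "integrable (measure_pmf (occ_pmf bos q)) X"
    unfolding X_def using m1 by (intro integrable_mult_right Bochner_Integration.integrable_diff) auto
  show "measure_pmf.expectation (occ_pmf bos q) X = 0"
    unfolding X_def using m1 by (simp add: Bochner_Integration.integral_diff one)
  let ?Y = "\<lambda>k. (real k)\<^sup>2 - 2 * occ_mean bos q * real k + (occ_mean bos q)\<^sup>2"
  have sq: "(\<lambda>k. (X k)\<^sup>2) = (\<lambda>k. b\<^sup>2 * ?Y k)"
    by (auto simp: X_def fun_eq_iff power2_eq_square algebra_simps)
  have "integrable (measure_pmf (occ_pmf bos q)) ?Y"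
    using m1 m2 by (intro Bochner_Integration.integrable_add Bochner_Integration.integrable_diff
        integrable_mult_right) auto
  then show "integrable (measure_pmf (occ_pmf bos q)) (\<lambda>k. (X k)\<^sup>2)"
    unfolding sq by (rule integrable_mult_right)
  have "measure_pmf.expectation (occ_pmf bos q) ?Y
      = measure_pmf.expectation (occ_pmf bos q) (\<lambda>k. (real k)\<^sup>2) - 2 * occ_mean bos q * occ_mean bos q
        + (occ_mean bos q)\<^sup>2"
    using m1 m2 by (simp add: Bochner_Integration.integral_add Bochner_Integration.integral_diff
        Bochner_Integration.integrable_diff one)
  also have "\<dots> \<le> occ_sq_bound bos q"
    using m2(2) zero_le_square[of "occ_mean bos q"] unfolding power2_eq_square by linarith
  finally show "measure_pmf.expectation (occ_pmf bos q) (\<lambda>k. (X k)\<^sup>2) \<le> b\<^sup>2 * occ_sq_bound bos q"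
    unfolding sq by (simp add: mult_left_mono)
qed

section \<open>Second moments and concentration\<close>

lemma (in prob_space) expectation_mult_indep_centered:
  fixes Z :: "'i \<Rightarrow> 'a \<Rightarrow> real"
  assumes ind: "indep_vars (\<lambda>_. borel) Z {i, j}" and "i \<noteq> j"
    and int: "integrable M (Z i)" "integrable M (Z j)" and zero: "expectation (Z i) = 0"
  shows "integrable M (\<lambda>\<omega>. Z i \<omega> * Z j \<omega>)" "expectation (\<lambda>\<omega>. Z i \<omega> * Z j \<omega>) = 0"
proof -
  have prod: "(\<lambda>\<omega>. Z i \<omega> * Z j \<omega>) = (\<lambda>\<omega>. \<Prod>k\<in>{i,j}. Z k \<omega>)"
    using \<open>i \<noteq> j\<close> by simp
  have int': "\<And>k. k \<in> {i, j} \<Longrightarrow> integrable M (Z k)"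
    using int by auto
  show "integrable M (\<lambda>\<omega>. Z i \<omega> * Z j \<omega>)"
    unfolding prod by (rule indep_vars_integrable[OF _ ind int']) simp
  have "expectation (\<lambda>\<omega>. Z i \<omega> * Z j \<omega>) = (\<Prod>k\<in>{i,j}. expectation (Z k))"
    unfolding prod by (rule indep_vars_lebesgue_integral[OF _ ind int']) simp
  then show "expectation (\<lambda>\<omega>. Z i \<omega> * Z j \<omega>) = 0"
    using \<open>i \<noteq> j\<close> zero by simp
qed

lemma (in prob_space) expectation_square_sum_indep:
  fixes Z :: "'i \<Rightarrow> 'a \<Rightarrow> real"
  assumes J: "finite J" and ind: "indep_vars (\<lambda>_. borel) Z J"
    and int1: "\<And>j. j \<in> J \<Longrightarrow> integrable M (Z j)"
    and int2: "\<And>j. j \<in> J \<Longrightarrow> integrable M (\<lambda>\<omega>. (Z j \<omega>)\<^sup>2)"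
    and zero: "\<And>j. j \<in> J \<Longrightarrow> expectation (Z j) = 0"
  shows "integrable M (\<lambda>\<omega>. (\<Sum>j\<in>J. Z j \<omega>)\<^sup>2)"
    "expectation (\<lambda>\<omega>. (\<Sum>j\<in>J. Z j \<omega>)\<^sup>2) = (\<Sum>j\<in>J. expectation (\<lambda>\<omega>. (Z j \<omega>)\<^sup>2))"
proof -
  have pair: "integrable M (\<lambda>\<omega>. Z i \<omega> * Z j \<omega>) \<and>
     expectation (\<lambda>\<omega>. Z i \<omega> * Z j \<omega>) = (if i = j then expectation (\<lambda>\<omega>. (Z i \<omega>)\<^sup>2) else 0)"
    if "i \<in> J" "j \<in> J" for i j
  proof (cases "i = j")
    case True
    then show ?thesis using int2[OF that(1)] by (simp add: power2_eq_square)
  next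
    case False
    have "indep_vars (\<lambda>_. borel) Z {i, j}"
      by (rule indep_vars_subset[OF ind]) (use that in blast)
    then show ?thesis
      using expectation_mult_indep_centered[OF _ False] int1 zero that False by auto
  qed
  have sq: "(\<lambda>\<omega>. (\<Sum>j\<in>J. Z j \<omega>)\<^sup>2) = (\<lambda>\<omega>. \<Sum>i\<in>J. \<Sum>j\<in>J. Z i \<omega> * Z j \<omega>)"
    by (simp add: power2_eq_square sum_product)
  show "integrable M (\<lambda>\<omega>. (\<Sum>j\<in>J. Z j \<omega>)\<^sup>2)"
    unfolding sq using pair by (intro Bochner_Integration.integrable_sum) blast
  have "expectation (\<lambda>\<omega>. \<Sum>i\<in>J. \<Sum>j\<in>J. Z i \<omega> * Z j \<omega>)
      = (\<Sum>i\<in>J. \<Sum>j\<in>J. expectation (\<lambda>\<omega>. Z i \<omega> * Z j \<omega>))"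
    using pair by (simp add: Bochner_Integration.integral_sum Bochner_Integration.integrable_sum)
  also have "\<dots> = (\<Sum>i\<in>J. \<Sum>j\<in>J. (if i = j then expectation (\<lambda>\<omega>. (Z i \<omega>)\<^sup>2) else 0))"
    using pair by (intro sum.cong refl) blast
  also have "\<dots> = (\<Sum>i\<in>J. expectation (\<lambda>\<omega>. (Z i \<omega>)\<^sup>2))"
    using J by (simp add: sum.delta)
  finally show "expectation (\<lambda>\<omega>. (\<Sum>j\<in>J. Z j \<omega>)\<^sup>2) = (\<Sum>j\<in>J. expectation (\<lambda>\<omega>. (Z j \<omega>)\<^sup>2))"
    unfolding sq .
qed

lemma (in prob_space) prob_ge_le_second_moment:
  fixes f :: "'a \<Rightarrow> real"
  assumes [measurable]: "f \<in> borel_measurable M" and int: "integrable M (\<lambda>x. (f x)\<^sup>2)" and "t > 0"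
  shows "prob {x\<in>space M. f x \<ge> t} \<le> expectation (\<lambda>x. (f x)\<^sup>2) / t\<^sup>2"
proof -
  have "prob {x\<in>space M. f x \<ge> t} \<le> prob {x\<in>space M. (f x)\<^sup>2 \<ge> t\<^sup>2}"
    using \<open>t > 0\<close> by (intro finite_measure_mono) (auto intro: power_mono)
  also have "\<dots> \<le> expectation (\<lambda>x. (f x)\<^sup>2) / t\<^sup>2"
    by (rule integral_Markov_inequality_measure[OF int, of "space M"]) (use \<open>t > 0\<close> in auto)
  finally show ?thesis .
qed

lemma ex_class_sum_ge:
  fixes f g :: "'u \<Rightarrow> real" and cls :: "'u \<Rightarrow> 'c"
  assumes "finite U" "real (card (cls ` U)) \<le> N" "\<delta> > 0"
    and "(\<Sum>u\<in>U. f u) \<ge> (\<Sum>u\<in>U. g u) + \<delta>"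
  shows "\<exists>C\<in>cls ` U. (\<Sum>u\<in>{u\<in>U. cls u = C}. f u) \<ge> (\<Sum>u\<in>{u\<in>U. cls u = C}. g u) + \<delta> / N"
proof (rule ccontr)
  assume "\<not> ?thesis"
  then have lt: "(\<Sum>u\<in>{u\<in>U. cls u = C}. f u) < (\<Sum>u\<in>{u\<in>U. cls u = C}. g u) + \<delta> / N"
    if "C \<in> cls ` U" for C
    using that by force
  have "U \<noteq> {}" using assms(3,4) by auto
  then have "cls ` U \<noteq> {}" "real (card (cls ` U)) > 0"
    using assms(1) by (auto simp: card_gt_0_iff)
  then have N: "N > 0" using assms(2) by linarith
  have group: "(\<Sum>C\<in>cls ` U. \<Sum>u\<in>{u\<in>U. cls u = C}. h u) = (\<Sum>u\<in>U. h u)" for h :: "'u \<Rightarrow> real"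
    by (rule sum.group) (use assms(1) in auto)
  have "(\<Sum>u\<in>U. f u) = (\<Sum>C\<in>cls ` U. \<Sum>u\<in>{u\<in>U. cls u = C}. f u)"
    by (rule group[symmetric])
  also have "\<dots> < (\<Sum>C\<in>cls ` U. (\<Sum>u\<in>{u\<in>U. cls u = C}. g u) + \<delta> / N)"
    by (rule sum_strict_mono) (use assms(1) \<open>cls ` U \<noteq> {}\<close> lt in auto)
  also have "\<dots> = (\<Sum>u\<in>U. g u) + real (card (cls ` U)) * (\<delta> / N)"
    by (simp add: sum.distrib group)
  also have "\<dots> \<le> (\<Sum>u\<in>U. g u) + \<delta>"
    using mult_right_mono[OF assms(2), of "\<delta> / N"] N assms(3) by simp
  finally show False using assms(4) by simp
qed

lemma (in prob_space) prob_sum_ge_le_Hoeffding_classes: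
  fixes B :: "'u \<Rightarrow> 'a \<Rightarrow> real" and cls :: "'u \<Rightarrow> 'c"
  assumes U: "finite U"
    and ind: "\<And>C. C \<in> cls ` U \<Longrightarrow> indep_vars (\<lambda>_. borel) B {u\<in>U. cls u = C}"
    and range: "\<And>u \<omega>. u \<in> U \<Longrightarrow> B u \<omega> \<in> {0..1}"
    and "\<delta> > 0" and N: "real (card (cls ` U)) \<le> N"
  shows "prob {\<omega>\<in>space M. (\<Sum>u\<in>U. B u \<omega>) \<ge> (\<Sum>u\<in>U. expectation (B u)) + \<delta>}
         \<le> real (card (cls ` U)) * exp (- 2 * (\<delta> / N)\<^sup>2 / real (card U))"
proof -
  define ev where "ev C = {\<omega>\<in>space M. (\<Sum>u\<in>{u\<in>U. cls u = C}. B u \<omega>)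
    \<ge> (\<Sum>u\<in>{u\<in>U. cls u = C}. expectation (B u)) + \<delta> / N}" for C
  have [measurable]: "B u \<in> borel_measurable M" if "u \<in> U" for u
    using ind[of "cls u"] that unfolding indep_vars_def by auto
  have events: "ev C \<in> events" for C
    unfolding ev_def by measurable
  have "{\<omega>\<in>space M. (\<Sum>u\<in>U. B u \<omega>) \<ge> (\<Sum>u\<in>U. expectation (B u)) + \<delta>} \<subseteq> (\<Union>C\<in>cls ` U. ev C)"
    using ex_class_sum_ge[OF U N \<open>\<delta> > 0\<close>] by (auto simp: ev_def)
  then have "prob {\<omega>\<in>space M. (\<Sum>u\<in>U. B u \<omega>) \<ge> (\<Sum>u\<in>U. expectation (B u)) + \<delta>}
      \<le> prob (\<Union>C\<in>cls ` U. ev C)"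
    by (rule finite_measure_mono) (use U events in auto)
  also have "\<dots> \<le> (\<Sum>C\<in>cls ` U. prob (ev C))"
    by (rule finite_measure_subadditive_finite) (use U events in auto)
  also have "\<dots> \<le> (\<Sum>C\<in>cls ` U. exp (- 2 * (\<delta> / N)\<^sup>2 / real (card U)))"
  proof (rule sum_mono)
    fix C assume C: "C \<in> cls ` U"
    define UC where "UC = {u\<in>U. cls u = C}"
    have UC: "finite UC" "UC \<noteq> {}" "card UC \<le> card U"
      using U C by (auto simp: UC_def card_mono)
    interpret H: Hoeffding_ineq M UC B "\<lambda>_. 0" "\<lambda>_. 1" "\<Sum>u\<in>UC. expectation (B u)"
      by unfold_locales (use UC ind[OF C] range in \<open>auto simp: UC_def\<close>)
    have N0: "N > 0"
      using N C U by (metis card_gt_0_iff empty_iff finite_imageI of_nat_0_less_iff order_less_le_trans)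
    have "prob (ev C) \<le> exp (- 2 * (\<delta> / N)\<^sup>2 / (\<Sum>u\<in>UC. (1 - 0)\<^sup>2))"
      unfolding ev_def UC_def[symmetric]
      by (rule H.Hoeffding_ineq_ge) (use \<open>\<delta> > 0\<close> N0 UC in \<open>auto simp: card_gt_0_iff\<close>)
    also have "\<dots> \<le> exp (- 2 * (\<delta> / N)\<^sup>2 / real (card U))"
      using UC by (simp add: frac_le card_gt_0_iff)
    finally show "prob (ev C) \<le> exp (- 2 * (\<delta> / N)\<^sup>2 / real (card U))" .
  qed
  finally show ?thesis by simp
qed

section \<open>The occupation model\<close>

locale occupation_model =
  fixes bos :: bool and \<beta> \<mu> :: real and \<theta> :: "real \<Rightarrow> real"
  assumes beta_pos: "\<beta> > 0" and continuous_theta: "continuous_on {0..} \<theta>"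
    and theta_nonneg: "\<And>x. x \<ge> 0 \<Longrightarrow> \<theta> x \<ge> 0" and mu_pos_if_bos: "bos \<Longrightarrow> \<mu> > 0"
begin

definition site_param :: "real \<Rightarrow> real" where
  "site_param r = exp (- \<beta> * (\<theta> r + \<mu>))"

definition radius :: "nat \<Rightarrow> int ^ 'd \<Rightarrow> real" where
  "radius L n = lat_norm n / real L"

definition lattice_param :: "nat \<Rightarrow> int ^ 'd \<Rightarrow> real" where
  "lattice_param L n = site_param (radius L n)"

lemma site_param_pos: "site_param r > 0"
  by (simp add: site_param_def)

lemma site_param_neq:
  "site_param r \<noteq> 0" "1 + site_param r \<noteq> 0"
  using site_param_pos[of r] by linarith+

lemma occ_param_site_param:
  assumes "r \<ge> 0"
  shows "occ_param bos (site_param r)"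
proof -
  have "site_param r < 1" if bos
  proof -
    have "\<theta> r + \<mu> > 0" using theta_nonneg[OF assms] mu_pos_if_bos[OF that] by linarith
    then show ?thesis using beta_pos by (simp add: site_param_def)
  qed
  then show ?thesis by (simp add: occ_param_def site_param_pos)
qed

lemma radius_nonneg: "radius L n \<ge> 0"
  by (simp add: radius_def lat_norm_nonneg)

lemma occ_param_lattice_param: "occ_param bos (lattice_param L n)"
  by (simp add: lattice_param_def occ_param_site_param radius_nonneg)

lemma Kdist_eq_occ_pmf_lattice_param: "Kdist bos \<beta> \<theta> \<mu> L n = occ_pmf bos (lattice_param L n)"
  by (simp add: Kdist_eq_occ_pmf qpar_def lattice_param_def site_param_def radius_def)

lemma Ent_eq_cross_entropy:
  "Ent bos \<beta> \<theta> \<mu> L u = cross_entropy bos (lattice_param L u) (lattice_param L u)"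
  by (simp add: Ent_def Kdist_eq_occ_pmf_lattice_param entropy_occ_pmf occ_param_lattice_param)

lemma continuous_on_site_param: "continuous_on {0..} site_param"
  unfolding site_param_def by (intro continuous_intros continuous_theta)

lemma continuous_on_site_param_pair:
  "continuous_on ({0..} \<times> {0..}) (\<lambda>x. site_param (fst x))"
  "continuous_on ({0..} \<times> {0..}) (\<lambda>x. site_param (snd x))"
  by (auto intro!: continuous_on_compose2[OF continuous_on_site_param] continuous_intros)

lemma site_param_neq_1: "bos \<Longrightarrow> r \<ge> 0 \<Longrightarrow> site_param r \<noteq> 1"
  using occ_param_site_param[of r] by (simp add: occ_param_def)

lemma continuous_on_cross_entropy_site_param:
  "continuous_on ({0..} \<times> {0..}) (\<lambda>x. cross_entropy bos (site_param (fst x)) (site_param (snd x)))"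
proof -
  have "continuous_on ({0..} \<times> {0..}) (\<lambda>x. log_partition bos (site_param (snd x))
      - ln (site_param (snd x)) * occ_mean bos (site_param (fst x)))"
    unfolding log_partition_def occ_mean_def
    by (cases bos) (auto intro!: continuous_intros continuous_on_site_param_pair
        simp: site_param_neq site_param_neq_1)
  then show ?thesis by (simp add: cross_entropy_def)
qed

lemma continuous_on_sq_bound_site_param:
  "continuous_on ({0..} \<times> {0..})
     (\<lambda>x. (ln (site_param (fst x)))\<^sup>2 * occ_sq_bound bos (site_param (snd x)))"
  unfolding occ_sq_bound_def
  by (cases bos) (auto intro!: continuous_intros continuous_on_site_param_pair
      simp: site_param_neq site_param_neq_1)

lemma cross_entropy_site_param_lower_bound:
  assumes "R \<ge> 0"
  shows "\<exists>E>0. \<forall>r\<in>{0..R}. E \<le> cross_entropy bos (site_param r) (site_param r)"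
proof -
  have "continuous_on {0..R} ((\<lambda>x. cross_entropy bos (site_param (fst x)) (site_param (snd x))) \<circ> (\<lambda>r. (r, r)))"
    by (rule continuous_on_compose)
      (auto intro!: continuous_intros continuous_on_subset[OF continuous_on_cross_entropy_site_param])
  then have cont: "continuous_on {0..R} (\<lambda>r. cross_entropy bos (site_param r) (site_param r))"
    by (simp add: comp_def)
  obtain r0 where r0: "r0 \<in> {0..R}"
    "\<forall>r\<in>{0..R}. cross_entropy bos (site_param r0) (site_param r0) \<le> cross_entropy bos (site_param r) (site_param r)"
    using continuous_attains_inf[OF compact_Icc _ cont] assms by auto
  moreover have "cross_entropy bos (site_param r0) (site_param r0) > 0"
    using r0 by (intro cross_entropy_pos occ_param_site_param) auto
  ultimately show ?thesis by blast
qed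

lemma sq_bound_site_param_upper_bound:
  "\<exists>V\<ge>0. \<forall>r1\<in>{0..R}. \<forall>r2\<in>{0..R}.
     (ln (site_param r1))\<^sup>2 * occ_sq_bound bos (site_param r2) \<le> V"
proof -
  let ?f = "\<lambda>x. (ln (site_param (fst x)))\<^sup>2 * occ_sq_bound bos (site_param (snd x))"
  have "compact (?f ` ({0..R} \<times> {0..R}))"
    by (intro compact_continuous_image compact_Times compact_Icc
        continuous_on_subset[OF continuous_on_sq_bound_site_param]) auto
  then have "bounded (?f ` ({0..R} \<times> {0..R}))"
    by (rule compact_imp_bounded)
  then obtain a where a: "\<forall>y\<in>?f ` ({0..R} \<times> {0..R}). norm y \<le> a"
    unfolding bounded_iff by blast
  show ?thesis
  proof (intro exI[of _ "max a 0"] conjI ballI)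
    fix r1 r2 assume "r1 \<in> {0..R}" "r2 \<in> {0..R}"
    then have "norm (?f (r1, r2)) \<le> a" using a by blast
    then show "(ln (site_param r1))\<^sup>2 * occ_sq_bound bos (site_param r2) \<le> max a 0" by simp
  qed simp
qed

lemma cross_entropy_site_param_uniform_continuity:
  assumes "\<eta> > 0"
  shows "\<exists>\<delta>>0. \<forall>r1\<in>{0..R}. \<forall>r2\<in>{0..R}. \<forall>r\<in>{0..R}. \<bar>r1 - r\<bar> < \<delta> \<longrightarrow> \<bar>r2 - r\<bar> < \<delta> \<longrightarrow>
     cross_entropy bos (site_param r1) (site_param r2) \<le> cross_entropy bos (site_param r) (site_param r) + \<eta>"
proof -
  let ?f = "\<lambda>x. cross_entropy bos (site_param (fst x)) (site_param (snd x))"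
  have "uniformly_continuous_on ({0..R} \<times> {0..R}) ?f"
    by (intro compact_uniformly_continuous compact_Times compact_Icc
        continuous_on_subset[OF continuous_on_cross_entropy_site_param]) auto
  then obtain d where d: "d > 0" "\<forall>x\<in>{0..R} \<times> {0..R}. \<forall>x'\<in>{0..R} \<times> {0..R}. dist x' x < d \<longrightarrow>
      dist (?f x') (?f x) < \<eta>"
    using assms unfolding uniformly_continuous_on_def by metis
  show ?thesis
  proof (intro exI[of _ "d/2"] conjI ballI impI)
    fix r1 r2 r assume r: "r1 \<in> {0..R}" "r2 \<in> {0..R}" "r \<in> {0..R}" "\<bar>r1 - r\<bar> < d/2" "\<bar>r2 - r\<bar> < d/2"
    have "dist (r1, r2) (r, r) \<le> \<bar>r1 - r\<bar> + \<bar>r2 - r\<bar>"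
      unfolding dist_Pair_Pair dist_real_def using sqrt_sum_squares_le_sum_abs by simp
    then have "dist (?f (r1, r2)) (?f (r, r)) < \<eta>"
      using d(2) r by auto
    then show "cross_entropy bos (site_param r1) (site_param r2) \<le> cross_entropy bos (site_param r) (site_param r) + \<eta>"
      by (simp add: dist_real_def abs_less_iff)
  qed (use d in simp)
qed

definition site_law :: "nat \<times> (int ^ 'd) \<Rightarrow> nat measure" where
  "site_law i = measure_pmf (occ_pmf bos (lattice_param (fst i) (snd i)))"

lemma Pmodel_eq_PiM_site_law:
  "(Pmodel bos \<beta> \<theta> \<mu> :: (nat \<times> (int ^ 'd) \<Rightarrow> nat) measure) = PiM UNIV site_law"
proof -
  have "(\<lambda>(L, n). measure_pmf (Kdist bos \<beta> \<theta> \<mu> L (n :: int ^ 'd))) = site_law"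
    by (auto simp: site_law_def Kdist_eq_occ_pmf_lattice_param)
  then show ?thesis by (simp add: Pmodel_def)
qed

lemma product_prob_space_site_law: "product_prob_space (site_law :: nat \<times> (int ^ 'd) \<Rightarrow> nat measure)"
  unfolding product_prob_space_def product_prob_space_axioms_def product_sigma_finite_def
  by (auto simp: site_law_def prob_space_measure_pmf prob_space_imp_sigma_finite)

lemma prob_space_site_model: "prob_space (PiM UNIV (site_law :: nat \<times> (int ^ 'd) \<Rightarrow> nat measure))"
proof -
  interpret product_prob_space "site_law :: nat \<times> (int ^ 'd) \<Rightarrow> nat measure" UNIV
    by (rule product_prob_space_site_law)
  show ?thesis by (rule P.prob_space_axioms)
qed

lemma measurable_site [measurable]:
  "(\<lambda>\<omega>. \<omega> i) \<in> measurable (PiM UNIV site_law) (count_space UNIV)"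
  using measurable_component_singleton[of i UNIV site_law] by (simp add: site_law_def)

lemma distr_site: "distr (PiM UNIV site_law) (site_law i) (\<lambda>\<omega>. \<omega> i) = (site_law :: nat \<times> (int ^ 'd) \<Rightarrow> nat measure) i"
proof -
  interpret product_prob_space "site_law :: nat \<times> (int ^ 'd) \<Rightarrow> nat measure" UNIV
    by (rule product_prob_space_site_law)
  show ?thesis by (rule PiM_component) simp
qed

lemma indep_vars_sites:
  "prob_space.indep_vars (PiM UNIV site_law) site_law (\<lambda>i \<omega>. \<omega> i) (UNIV :: (nat \<times> (int ^ 'd)) set)"
proof -
  interpret P: prob_space "PiM UNIV (site_law :: nat \<times> (int ^ 'd) \<Rightarrow> nat measure)"
    by (rule prob_space_site_model)
  have "\<And>i. P.random_variable (site_law i) (\<lambda>\<omega>. \<omega> i)"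
    by (rule measurable_component_singleton) simp
  then show ?thesis
    by (subst P.indep_vars_iff_distr_eq_PiM) (simp_all add: restrict_UNIV distr_site distr_id)
qed

lemma integral_site:
  fixes g :: "nat \<Rightarrow> real"
  assumes "integrable (site_law i) g"
  shows "integrable (PiM UNIV site_law) (\<lambda>\<omega>. g (\<omega> (i :: nat \<times> (int ^ 'd))))"
    "integral\<^sup>L (PiM UNIV site_law) (\<lambda>\<omega>. g (\<omega> i)) = integral\<^sup>L (site_law i) g"
proof -
  have m: "(\<lambda>\<omega>. \<omega> i) \<in> measurable (PiM UNIV site_law) (site_law i)"
    by (rule measurable_component_singleton) simp
  have g: "g \<in> borel_measurable (site_law i)" by (simp add: site_law_def)
  show "integrable (PiM UNIV site_law) (\<lambda>\<omega>. g (\<omega> i))"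
    using assms integrable_distr_eq[OF m g] distr_site[of i] by simp
  show "integral\<^sup>L (PiM UNIV site_law) (\<lambda>\<omega>. g (\<omega> i)) = integral\<^sup>L (site_law i) g"
    using integral_distr[OF m g] distr_site[of i] by simp
qed

lemma measure_site:
  "measure (PiM UNIV site_law) {\<omega>\<in>space (PiM UNIV site_law). \<omega> (i :: nat \<times> (int ^ 'd)) \<in> A}
   = measure (site_law i) A"
proof -
  have m: "(\<lambda>\<omega>. \<omega> i) \<in> measurable (PiM UNIV site_law) (site_law i)"
    by (rule measurable_component_singleton) simp
  have "measure (site_law i) A = measure (distr (PiM UNIV site_law) (site_law i) (\<lambda>\<omega>. \<omega> i)) A"
    using distr_site[of i] by simp
  also have "\<dots> = measure (PiM UNIV site_law) ((\<lambda>\<omega>. \<omega> i) -` A \<inter> space (PiM UNIV site_law))"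
    by (rule measure_distr[OF m]) (simp add: site_law_def)
  finally show ?thesis by (simp add: vimage_def Int_def conj_commute)
qed

end

section \<open>Chebyshev bound for the surprisal of a pattern\<close>

lemma prod_pmf_occ_pmf_eq_exp_surprisal:
  assumes "occ_param bos c" "\<forall>j\<in>J. occ_support bos (x j)"
  shows "(\<Prod>j\<in>J. pmf (occ_pmf bos c) (x j)) = exp (- (\<Sum>j\<in>J. surprisal bos c (x j)))"
proof (cases "finite J")
  case True
  have "(\<Prod>j\<in>J. pmf (occ_pmf bos c) (x j)) = (\<Prod>j\<in>J. exp (- surprisal bos c (x j)))"
    using assms by (intro prod.cong) (simp_all add: pmf_occ_pmf)
  also have "\<dots> = exp (- (\<Sum>j\<in>J. surprisal bos c (x j)))"
    using True by (simp add: exp_sum flip: sum_negf)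
  finally show ?thesis .
qed simp

lemma block_sum_le_of_entropy_budget:
  fixes f :: "int ^ 'd \<Rightarrow> real"
  assumes "0 < \<epsilon>" "\<epsilon> < 1" "0 < Emin" "Emin \<le> E" "0 \<le> x"
    and "\<And>j. j \<in> Box 0 s \<Longrightarrow> f j \<le> E + \<epsilon> * Emin / 4"
    and "real s ^ CARD('d) * E \<le> (1 - \<epsilon>) * x"
  shows "(\<Sum>j\<in>Box 0 s. f j) \<le> (1 - \<epsilon>/2) * x"
proof -
  have "(\<Sum>j\<in>Box 0 s. f j) \<le> (\<Sum>j\<in>Box (0::int^'d) s. E + \<epsilon> * Emin / 4)"
    by (rule sum_mono) (use assms(6) in auto)
  also have "\<dots> = real s ^ CARD('d) * (E + \<epsilon> * Emin / 4)"
    by (simp add: card_Box)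
  also have "\<dots> \<le> real s ^ CARD('d) * (E * (1 + \<epsilon>/4))"
    using mult_left_mono[OF assms(4), of \<epsilon>] assms(1)
    by (intro mult_left_mono) (auto simp: algebra_simps)
  also have "\<dots> = (real s ^ CARD('d) * E) * (1 + \<epsilon>/4)"
    by simp
  also have "\<dots> \<le> ((1 - \<epsilon>) * x) * (1 + \<epsilon>/4)"
    using assms(1,7) by (intro mult_right_mono) auto
  also have "\<dots> \<le> (1 - \<epsilon>/2) * x"
  proof -
    have "(1 - \<epsilon>) * (1 + \<epsilon>/4) \<le> 1 - \<epsilon>/2" using assms(1,2) by (simp add: algebra_simps)
    then show ?thesis using assms(5) by (metis mult.assoc mult.commute mult_right_mono)
  qed
  finally show ?thesis .
qed

context occupation_model
begin

lemma prob_sum_surprisal_ge: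
  fixes I :: "(nat \<times> (int ^ 'd)) set"
  assumes I: "finite I" and t: "t > 0"
  shows "measure (PiM UNIV site_law) {\<omega>\<in>space (PiM UNIV site_law).
            (\<Sum>i\<in>I. surprisal bos c (\<omega> i)) \<ge> (\<Sum>i\<in>I. cross_entropy bos (lattice_param (fst i) (snd i)) c) + t}
         \<le> (\<Sum>i\<in>I. (ln c)\<^sup>2 * occ_sq_bound bos (lattice_param (fst i) (snd i))) / t\<^sup>2"
proof -
  interpret P: prob_space "PiM UNIV (site_law :: nat \<times> (int ^ 'd) \<Rightarrow> nat measure)"
    by (rule prob_space_site_model)
  define G where "G i k = - ln c * (real k - occ_mean bos (lattice_param (fst i) (snd i)))"
    for i :: "nat \<times> (int ^ 'd)" and k
  have G: "G i k = surprisal bos c k - cross_entropy bos (lattice_param (fst i) (snd i)) c" for i k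
    by (simp add: G_def surprisal_def cross_entropy_def algebra_simps)
  have moments: "integrable (site_law i) (G i) \<and> integral\<^sup>L (site_law i) (G i) = 0 \<and>
      integrable (site_law i) (\<lambda>k. (G i k)\<^sup>2) \<and>
      integral\<^sup>L (site_law i) (\<lambda>k. (G i k)\<^sup>2) \<le> (- ln c)\<^sup>2 * occ_sq_bound bos (lattice_param (fst i) (snd i))"
    for i
  proof -
    obtain L' n where i: "i = (L', n)" by force
    have "G i = (\<lambda>k. - ln c * (real k - occ_mean bos (lattice_param L' n)))"
      by (simp add: G_def i fun_eq_iff)
    then show ?thesis
      unfolding site_law_def i fst_conv snd_conv
      using occ_pmf_centered_moments[OF occ_param_lattice_param[of L' n], where b = "- ln c"] by simp
  qed
  have ind: "P.indep_vars (\<lambda>_. borel) (\<lambda>i \<omega>. G i (\<omega> i)) I"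
    by (rule P.indep_vars_subset[OF P.indep_vars_compose2[OF indep_vars_sites]])
      (simp_all add: site_law_def)
  have site_moments: "integrable (PiM UNIV site_law) (\<lambda>\<omega>. G i (\<omega> i))"
    "integrable (PiM UNIV site_law) (\<lambda>\<omega>. (G i (\<omega> i))\<^sup>2)"
    "P.expectation (\<lambda>\<omega>. G i (\<omega> i)) = 0"
    "P.expectation (\<lambda>\<omega>. (G i (\<omega> i))\<^sup>2) \<le> (ln c)\<^sup>2 * occ_sq_bound bos (lattice_param (fst i) (snd i))"
    for i
    using moments[of i] integral_site[of i "G i"] integral_site[of i "\<lambda>k. (G i k)\<^sup>2"] by simp_all
  note sum_sq = P.expectation_square_sum_indep[OF I ind site_moments(1,2,3)]
  have "P.prob {\<omega>\<in>space (PiM UNIV site_law). (\<Sum>i\<in>I. G i (\<omega> i)) \<ge> t}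
      \<le> P.expectation (\<lambda>\<omega>. (\<Sum>i\<in>I. G i (\<omega> i))\<^sup>2) / t\<^sup>2"
    by (rule P.prob_ge_le_second_moment[OF _ sum_sq(1) t]) measurable
  also have "\<dots> \<le> (\<Sum>i\<in>I. (ln c)\<^sup>2 * occ_sq_bound bos (lattice_param (fst i) (snd i))) / t\<^sup>2"
    unfolding sum_sq(2) using site_moments(4) by (intro divide_right_mono sum_mono) simp_all
  finally show ?thesis
    by (simp add: G sum_subtractf algebra_simps)
qed

lemma prob_outside_support:
  fixes I :: "(nat \<times> (int ^ 'd)) set"
  assumes "finite I"
  shows "measure (PiM UNIV site_law) {\<omega>\<in>space (PiM UNIV site_law). \<exists>i\<in>I. \<not> occ_support bos (\<omega> i)} = 0"
proof -
  interpret P: prob_space "PiM UNIV (site_law :: nat \<times> (int ^ 'd) \<Rightarrow> nat measure)"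
    by (rule prob_space_site_model)
  have "{\<omega>\<in>space (PiM UNIV site_law). \<exists>i\<in>I. \<not> occ_support bos (\<omega> i)}
      = (\<Union>i\<in>I. {\<omega>\<in>space (PiM UNIV site_law). \<omega> i \<in> {k. \<not> occ_support bos k}})"
    by auto
  also have "P.prob \<dots> \<le> (\<Sum>i\<in>I. P.prob {\<omega>\<in>space (PiM UNIV site_law). \<omega> i \<in> {k. \<not> occ_support bos k}})"
    by (rule P.finite_measure_subadditive_finite[OF assms]) auto
  also have "\<dots> = 0"
    by (intro sum.neutral ballI) (simp only: measure_site,
        simp add: site_law_def measure_occ_pmf_not_support occ_param_lattice_param)
  finally show ?thesis by (simp add: measure_le_0_iff)
qed

lemma prob_block_atypical_le_variance:
  fixes u :: "int ^ 'd"
  assumes "(\<Sum>j\<in>Box 0 s. cross_entropy bos (lattice_param L (u + j)) c) < y"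
  shows "measure (PiM UNIV site_law) {\<omega>\<in>space (PiM UNIV site_law).
      y < (\<Sum>j\<in>Box 0 s. surprisal bos c (\<omega> (L, u + j))) \<or> (\<exists>j\<in>Box 0 s. \<not> occ_support bos (\<omega> (L, u + j)))}
    \<le> (\<Sum>j\<in>Box 0 s. (ln c)\<^sup>2 * occ_sq_bound bos (lattice_param L (u + j)))
       / (y - (\<Sum>j\<in>Box 0 s. cross_entropy bos (lattice_param L (u + j)) c))\<^sup>2"
proof -
  interpret P: prob_space "PiM UNIV (site_law :: nat \<times> (int ^ 'd) \<Rightarrow> nat measure)"
    by (rule prob_space_site_model)
  define I where "I = (\<lambda>j. (L, u + j)) ` Box 0 s"
  have I [measurable]: "finite I" by (simp add: I_def)
  have reindex: "(\<Sum>i\<in>I. h i) = (\<Sum>j\<in>Box 0 s. h (L, u + j))" for h :: "_ \<Rightarrow> real"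
    unfolding I_def by (rule sum.reindex_cong[of "\<lambda>j. (L, u + j)"]) (auto simp: inj_on_def)
  have ex_I: "(\<exists>i\<in>I. P i) \<longleftrightarrow> (\<exists>j\<in>Box 0 s. P (L, u + j))" for P
    by (auto simp: I_def)
  define t where "t = y - (\<Sum>j\<in>Box 0 s. cross_entropy bos (lattice_param L (u + j)) c)"
  have t: "t > 0" using assms by (simp add: t_def)
  let ?A = "{\<omega>\<in>space (PiM UNIV site_law).
    (\<Sum>i\<in>I. surprisal bos c (\<omega> i)) \<ge> (\<Sum>i\<in>I. cross_entropy bos (lattice_param (fst i) (snd i)) c) + t}"
  let ?B = "{\<omega>\<in>space (PiM UNIV site_law). \<exists>i\<in>I. \<not> occ_support bos (\<omega> i)}"
  have "measure (PiM UNIV site_law) {\<omega>\<in>space (PiM UNIV site_law).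
      y < (\<Sum>j\<in>Box 0 s. surprisal bos c (\<omega> (L, u + j))) \<or> (\<exists>j\<in>Box 0 s. \<not> occ_support bos (\<omega> (L, u + j)))}
      \<le> measure (PiM UNIV site_law) (?A \<union> ?B)"
    by (rule P.finite_measure_mono) (auto simp: reindex ex_I t_def)
  also have "\<dots> \<le> measure (PiM UNIV site_law) ?A + measure (PiM UNIV site_law) ?B"
    by (rule measure_Un_le) measurable
  also have "\<dots> \<le> (\<Sum>i\<in>I. (ln c)\<^sup>2 * occ_sq_bound bos (lattice_param (fst i) (snd i))) / t\<^sup>2"
    using prob_sum_surprisal_ge[OF I t, of c] prob_outside_support[OF I] by simp
  finally show ?thesis by (simp add: reindex t_def)
qed

lemma prob_block_atypical_le:
  fixes u :: "int ^ 'd"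
  assumes eps: "0 < \<epsilon>" "\<epsilon> < 1" and E: "0 < Emin" "Emin \<le> E"
    and B: "B \<ge> 0" "\<And>j. j \<in> Box 0 s \<Longrightarrow> (ln c)\<^sup>2 * occ_sq_bound bos (lattice_param L (u + j)) \<le> B"
    and close: "\<And>j. j \<in> Box 0 s \<Longrightarrow> cross_entropy bos (lattice_param L (u + j)) c \<le> E + \<epsilon> * Emin / 4"
    and L: "L \<ge> 2" and s: "real s ^ CARD('d) * E \<le> (1 - \<epsilon>) * ln (real L)"
  shows "measure (PiM UNIV site_law) {\<omega>\<in>space (PiM UNIV site_law). (1 - \<epsilon>/4) * ln (real L) <
            (\<Sum>j\<in>Box 0 s. surprisal bos c (\<omega> (L, u + j))) \<or> (\<exists>j\<in>Box 0 s. \<not> occ_support bos (\<omega> (L, u + j)))}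
         \<le> 16 * B / (Emin * \<epsilon>\<^sup>2 * ln (real L))"
proof -
  define mean where "mean = (\<Sum>j\<in>Box 0 s. cross_entropy bos (lattice_param L (u + j)) c)"
  have lnL: "ln (real L) > 0" using L by simp
  have "mean \<le> (1 - \<epsilon>/2) * ln (real L)"
    unfolding mean_def using eps E lnL close s by (intro block_sum_le_of_entropy_budget) auto
  then have t: "\<epsilon>/4 * ln (real L) \<le> (1 - \<epsilon>/4) * ln (real L) - mean"
    by (simp add: algebra_simps)
  have t0: "0 < \<epsilon>/4 * ln (real L)" using eps lnL by simp
  have "measure (PiM UNIV site_law) {\<omega>\<in>space (PiM UNIV site_law). (1 - \<epsilon>/4) * ln (real L) <
            (\<Sum>j\<in>Box 0 s. surprisal bos c (\<omega> (L, u + j))) \<or> (\<exists>j\<in>Box 0 s. \<not> occ_support bos (\<omega> (L, u + j)))}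
      \<le> (\<Sum>j\<in>Box 0 s. (ln c)\<^sup>2 * occ_sq_bound bos (lattice_param L (u + j))) / ((1 - \<epsilon>/4) * ln (real L) - mean)\<^sup>2"
    unfolding mean_def using t t0 by (intro prob_block_atypical_le_variance) (simp add: mean_def)
  also have "\<dots> \<le> (real s ^ CARD('d) * B) / (\<epsilon>/4 * ln (real L))\<^sup>2"
  proof (rule frac_le)
    show "(\<Sum>j\<in>Box 0 s. (ln c)\<^sup>2 * occ_sq_bound bos (lattice_param L (u + j))) \<le> real s ^ CARD('d) * B"
      using sum_mono[of "Box 0 s" _ "\<lambda>_. B", OF B(2)] by (simp add: card_Box)
    show "(\<epsilon>/4 * ln (real L))\<^sup>2 \<le> ((1 - \<epsilon>/4) * ln (real L) - mean)\<^sup>2"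
      using t t0 by (intro power_mono) auto
  qed (use B t0 in auto)
  also have "\<dots> \<le> 16 * B / (Emin * \<epsilon>\<^sup>2 * ln (real L))"
  proof -
    have "real s ^ CARD('d) * Emin \<le> ln (real L)"
      using mult_left_mono[OF E(2), of "real s ^ CARD('d)"] s eps lnL
      by (smt (verit) mult_left_le_one_le mult_nonneg_nonneg of_nat_0_le_iff zero_le_power)
    then have "real s ^ CARD('d) \<le> ln (real L) / Emin"
      using E by (simp add: pos_le_divide_eq)
    then have "real s ^ CARD('d) * B \<le> ln (real L) / Emin * B"
      using B(1) by (rule mult_right_mono)
    then show ?thesis
      using lnL E eps by (simp add: divide_right_mono field_simps power2_eq_square)
  qed
  finally show ?thesis .
qed

end

section \<open>Recurrent sites and their patterns\<close>

text \<open>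
  The constants exist by compactness of [0, Rmax], which contains every radius |u + j|/L
  occurring in a pattern once L is large.
\<close>

locale entropy_bounds = occupation_model +
  fixes coords :: "'d::finite itself"
    and \<epsilon> Emin Vmax \<delta> Rmax :: real
  assumes eps: "0 < \<epsilon>" "\<epsilon> < 1" and Emin_pos: "Emin > 0"
    and Rmax: "2 * real CARD('d) + 1 \<le> Rmax"
    and Emin_le: "\<And>r. r \<in> {0..Rmax} \<Longrightarrow> Emin \<le> cross_entropy bos (site_param r) (site_param r)"
    and Vmax_nonneg: "Vmax \<ge> 0"
    and Vmax_ge: "\<And>r1 r2. r1 \<in> {0..Rmax} \<Longrightarrow> r2 \<in> {0..Rmax} \<Longrightarrow>
      (ln (site_param r1))\<^sup>2 * occ_sq_bound bos (site_param r2) \<le> Vmax"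
    and delta_pos: "\<delta> > 0"
    and cross_entropy_close: "\<And>r1 r2 r. r1 \<in> {0..Rmax} \<Longrightarrow> r2 \<in> {0..Rmax} \<Longrightarrow> r \<in> {0..Rmax} \<Longrightarrow>
      \<bar>r1 - r\<bar> < \<delta> \<Longrightarrow> \<bar>r2 - r\<bar> < \<delta> \<Longrightarrow>
      cross_entropy bos (site_param r1) (site_param r2) \<le> cross_entropy bos (site_param r) (site_param r) + \<epsilon> * Emin / 4"
begin

definition pattern_bound :: "nat \<Rightarrow> int ^ 'd \<Rightarrow> real" where
  "pattern_bound L u = root CARD('d) (ln (real L) * (1 - \<epsilon>) / Ent bos \<beta> \<theta> \<mu> L u)"

definition pattern_size :: "nat \<Rightarrow> int ^ 'd \<Rightarrow> nat" where
  "pattern_size L u = nat \<lfloor>pattern_bound L u\<rfloor>"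

definition max_pattern_size :: "nat \<Rightarrow> nat" where
  "max_pattern_size L = nat \<lfloor>root CARD('d) (ln (real L) / Emin)\<rfloor> + 1"

definition recurrent_sites :: "nat \<Rightarrow> (nat \<times> (int ^ 'd) \<Rightarrow> nat) \<Rightarrow> (int ^ 'd) set" where
  "recurrent_sites L \<omega> = {u \<in> Box 1 L. Rrec L u (\<lambda>n. \<omega> (L, n)) \<le> ereal (pattern_bound L u)}"

definition n_cells :: nat where
  "n_cells = nat \<lfloor>Rmax / (\<delta>/2)\<rfloor> + 1"

text \<open>
  All sites of the pattern of u are compared with the single parameter c at the left end of the
  delta/2-cell containing |u|/L, so that only finitely many reference laws occur.
\<close>

definition radius_cell :: "nat \<Rightarrow> int ^ 'd \<Rightarrow> nat" where
  "radius_cell L u = nat \<lfloor>radius L u / (\<delta>/2)\<rfloor>"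

definition cell_param :: "nat \<Rightarrow> int ^ 'd \<Rightarrow> real" where
  "cell_param L u = site_param (\<delta>/2 * real (radius_cell L u))"

definition pattern :: "nat \<Rightarrow> int ^ 'd \<Rightarrow> (nat \<times> (int ^ 'd) \<Rightarrow> nat) \<Rightarrow> int ^ 'd \<Rightarrow> nat" where
  "pattern L u \<omega> = restrict (\<lambda>j. \<omega> (L, u + j)) (Box 0 (pattern_size L u))"

definition pattern_weight :: "nat \<times> nat \<Rightarrow> (int ^ 'd \<Rightarrow> nat) \<Rightarrow> real" where
  "pattern_weight k x = (\<Prod>j\<in>Box 0 (snd k). pmf (occ_pmf bos (site_param (\<delta>/2 * real (fst k)))) (x j))"

definition atypical :: "nat \<Rightarrow> int ^ 'd \<Rightarrow> (nat \<times> (int ^ 'd) \<Rightarrow> nat) \<Rightarrow> bool" where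
  "atypical L u \<omega> \<longleftrightarrow> 1 \<le> pattern_size L u \<and> ((1 - \<epsilon>/4) * ln (real L) <
      (\<Sum>j\<in>Box 0 (pattern_size L u). surprisal bos (cell_param L u) (\<omega> (L, u + j))) \<or>
      (\<exists>j\<in>Box 0 (pattern_size L u). \<not> occ_support bos (\<omega> (L, u + j))))"

lemma radius_le_card:
  fixes u :: "int ^ 'd"
  assumes "u \<in> Box 1 L" "L \<ge> 1"
  shows "radius L u \<le> real CARD('d)"
proof -
  have "\<bar>u $ i\<bar> \<le> int L" for i
  proof -
    have "1 \<le> u $ i" "u $ i \<le> int L" using assms(1) by (auto simp: Box_def)
    then show ?thesis by arith
  qed
  then have "lat_norm u \<le> real CARD('d) * real_of_int (int L)" by (rule lat_norm_le)
  then show ?thesis using assms(2) by (simp add: radius_def field_simps)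
qed

lemma radius_in_range:
  fixes u :: "int ^ 'd"
  assumes "u \<in> Box 1 L" "L \<ge> 1"
  shows "radius L u \<in> {0..Rmax}"
  using radius_le_card[OF assms] radius_nonneg[of L u] Rmax by auto

lemma Ent_ge_Emin:
  fixes u :: "int ^ 'd"
  assumes "u \<in> Box 1 L" "L \<ge> 1"
  shows "Ent bos \<beta> \<theta> \<mu> L u \<ge> Emin"
  using Emin_le[OF radius_in_range[OF assms]] by (simp add: Ent_eq_cross_entropy lattice_param_def)

lemma pattern_size_less_max:
  fixes u :: "int ^ 'd"
  assumes "u \<in> Box 1 L" "L \<ge> 1"
  shows "pattern_size L u < max_pattern_size L"
proof -
  define E where "E = Ent bos \<beta> \<theta> \<mu> L u"
  have E: "E \<ge> Emin" using Ent_ge_Emin[OF assms] by (simp add: E_def)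
  have lnL: "ln (real L) \<ge> 0" using assms(2) by simp
  have "ln (real L) * (1 - \<epsilon>) / E \<le> ln (real L) / E"
    using eps lnL E Emin_pos by (intro divide_right_mono) (auto simp: mult_left_le)
  also have "\<dots> \<le> ln (real L) / Emin"
    using lnL E Emin_pos by (intro divide_left_mono) auto
  finally have "pattern_bound L u \<le> root CARD('d) (ln (real L) / Emin)"
    unfolding pattern_bound_def E_def by (subst real_root_le_iff) auto
  then have "\<lfloor>pattern_bound L u\<rfloor> \<le> \<lfloor>root CARD('d) (ln (real L) / Emin)\<rfloor>" by (rule floor_mono)
  then show ?thesis unfolding pattern_size_def max_pattern_size_def by linarith
qed

lemma pattern_size_power_le:
  fixes u :: "int ^ 'd"
  assumes "u \<in> Box 1 L" "L \<ge> 1"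
  shows "real (pattern_size L u) ^ CARD('d) * Ent bos \<beta> \<theta> \<mu> L u \<le> (1 - \<epsilon>) * ln (real L)"
proof (cases "pattern_size L u = 0")
  case True
  then show ?thesis using assms(2) eps by (simp add: zero_power)
next
  case False
  define E where "E = Ent bos \<beta> \<theta> \<mu> L u"
  define x where "x = ln (real L) * (1 - \<epsilon>) / E"
  have E: "E > 0" using Ent_ge_Emin[OF assms] Emin_pos by (simp add: E_def)
  have t1: "pattern_bound L u \<ge> 1" using False by (simp add: pattern_size_def)
  then have "x > 0" by (simp add: pattern_bound_def x_def E_def)
  have "real (pattern_size L u) \<le> pattern_bound L u" using t1 by (simp add: pattern_size_def)
  then have "real (pattern_size L u) ^ CARD('d) \<le> pattern_bound L u ^ CARD('d)"
    by (intro power_mono) auto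
  also have "\<dots> = x"
    using \<open>x > 0\<close> by (simp add: pattern_bound_def x_def E_def real_root_pow_pos2)
  finally have "real (pattern_size L u) ^ CARD('d) * E \<le> x * E" using E by (intro mult_right_mono) auto
  also have "x * E = (1 - \<epsilon>) * ln (real L)" using E by (simp add: x_def)
  finally show ?thesis by (simp add: E_def)
qed

lemma radius_cell_props:
  fixes u :: "int ^ 'd"
  assumes "u \<in> Box 1 L" "L \<ge> 1"
  shows "radius_cell L u < n_cells" "\<delta>/2 * real (radius_cell L u) \<in> {0..Rmax}"
    "\<bar>\<delta>/2 * real (radius_cell L u) - radius L u\<bar> < \<delta>"
proof -
  define h where "h = \<delta>/2"
  have h: "h > 0" using delta_pos by (simp add: h_def)
  have r: "radius L u \<in> {0..Rmax}" by (rule radius_in_range[OF assms])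
  have cell: "real (radius_cell L u) = real_of_int \<lfloor>radius L u / h\<rfloor>"
    using r h by (simp add: radius_cell_def h_def)
  have "real_of_int \<lfloor>radius L u / h\<rfloor> * h \<le> radius L u"
    using of_int_floor_le[of "radius L u / h"] by (simp only: pos_le_divide_eq[OF h])
  moreover have "radius L u < (real_of_int \<lfloor>radius L u / h\<rfloor> + 1) * h"
    using real_of_int_floor_add_one_gt[of "radius L u / h"] by (simp only: pos_divide_less_eq[OF h])
  ultimately
  have le: "h * real (radius_cell L u) \<le> radius L u" "radius L u - h * real (radius_cell L u) < h"
    by (simp_all add: cell algebra_simps)
  then show "\<delta>/2 * real (radius_cell L u) \<in> {0..Rmax}" "\<bar>\<delta>/2 * real (radius_cell L u) - radius L u\<bar> < \<delta>"
    using r h unfolding h_def by auto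
  have "\<lfloor>radius L u / h\<rfloor> \<le> \<lfloor>Rmax / h\<rfloor>" using r h by (intro floor_mono divide_right_mono) auto
  then show "radius_cell L u < n_cells" unfolding radius_cell_def n_cells_def h_def by linarith
qed

lemma occ_param_cell_param: "occ_param bos (cell_param L u)"
  unfolding cell_param_def by (rule occ_param_site_param) (use delta_pos in simp)

lemma inj_on_cell_pattern:
  "inj_on (\<lambda>u. ((radius_cell L u, pattern_size L u), pattern L u \<omega>)) (recurrent_sites L \<omega>)"
proof (rule inj_onI)
  fix u v
  assume u: "u \<in> recurrent_sites L \<omega>" and v: "v \<in> recurrent_sites L \<omega>"
    and eq: "((radius_cell L u, pattern_size L u), pattern L u \<omega>) = ((radius_cell L v, pattern_size L v), pattern L v \<omega>)"
  have size: "pattern_size L u = pattern_size L v" using eq by simp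
  have "\<omega> (L, u + j) = \<omega> (L, v + j)" if "j \<in> Box 0 (pattern_size L u)" for j
  proof -
    have "pattern L u \<omega> j = pattern L v \<omega> j" using eq by simp
    then show ?thesis using that size by (simp add: pattern_def)
  qed
  then have "\<not> pat_differ (\<lambda>n. \<omega> (L, n)) u v (pattern_size L u)"
    by (simp add: pat_differ_def)
  with Rrec_le_imp_unique_pattern(2)[of L u "\<lambda>n. \<omega> (L, n)" "pattern_bound L u"] u v
  show "u = v"
    by (auto simp: recurrent_sites_def pattern_size_def)
qed

lemma pattern_weight_ge:
  fixes u :: "int ^ 'd"
  assumes "\<not> atypical L u \<omega>" "1 \<le> pattern_size L u"
  shows "pattern_weight (radius_cell L u, pattern_size L u) (pattern L u \<omega>) \<ge> exp (- ((1 - \<epsilon>/4) * ln (real L)))"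
proof -
  have sum_le: "(\<Sum>j\<in>Box 0 (pattern_size L u). surprisal bos (cell_param L u) (\<omega> (L, u + j))) \<le> (1 - \<epsilon>/4) * ln (real L)"
    and supp: "\<forall>j\<in>Box 0 (pattern_size L u). occ_support bos (\<omega> (L, u + j))"
    using assms by (auto simp: atypical_def not_less)
  have "pattern_weight (radius_cell L u, pattern_size L u) (pattern L u \<omega>)
      = (\<Prod>j\<in>Box 0 (pattern_size L u). pmf (occ_pmf bos (cell_param L u)) (\<omega> (L, u + j)))"
    unfolding pattern_weight_def pattern_def cell_param_def by (intro prod.cong) simp_all
  also have "\<dots> = exp (- (\<Sum>j\<in>Box 0 (pattern_size L u). surprisal bos (cell_param L u) (\<omega> (L, u + j))))"
    by (rule prod_pmf_occ_pmf_eq_exp_surprisal[OF occ_param_cell_param supp])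
  finally show ?thesis using sum_le by simp
qed

lemma card_recurrent_sites_le:
  assumes L: "L \<ge> 2"
  shows "real (card (recurrent_sites L \<omega>))
     \<le> real (n_cells * max_pattern_size L) * exp ((1 - \<epsilon>/4) * ln (real L)) + real (card {u \<in> Box 1 L. atypical L u \<omega>})"
proof -
  define U where "U = {u \<in> recurrent_sites L \<omega>. \<not> atypical L u \<omega>}"
  define K where "K = {..<n_cells} \<times> {..<max_pattern_size L}"
  have U: "finite U" "U \<subseteq> Box 1 L" by (auto simp: U_def recurrent_sites_def)
  have size: "1 \<le> pattern_size L u" if "u \<in> recurrent_sites L \<omega>" for u
  proof -
    have "1 \<le> pattern_bound L u"
      using Rrec_le_imp_unique_pattern(1)[of L u "\<lambda>n. \<omega> (L, n)"] that by (simp add: recurrent_sites_def)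
    then show ?thesis unfolding pattern_size_def by linarith
  qed
  have inj: "inj_on (\<lambda>u. ((radius_cell L u, pattern_size L u), pattern L u \<omega>)) U"
    by (rule inj_on_subset[OF inj_on_cell_pattern]) (auto simp: U_def)
  have "real (card U) \<le> real (card K) / exp (- ((1 - \<epsilon>/4) * ln (real L)))"
  proof (rule card_le_card_keys_div_weight[OF U(1) _ inj, where Q = pattern_weight])
    show "(radius_cell L u, pattern_size L u) \<in> K" if "u \<in> U" for u
      using that U(2) L radius_cell_props(1) pattern_size_less_max by (auto simp: K_def)
    show "pattern_weight (radius_cell L u, pattern_size L u) (pattern L u \<omega>) \<ge> exp (- ((1 - \<epsilon>/4) * ln (real L)))"
      if "u \<in> U" for u
      using that size by (intro pattern_weight_ge) (auto simp: U_def)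
    show "(\<Sum>x\<in>G. pattern_weight k x) \<le> 1"
      if "finite G" "G \<subseteq> (\<lambda>u. pattern L u \<omega>) ` {u\<in>U. (radius_cell L u, pattern_size L u) = k}" for k G
    proof -
      have "G \<subseteq> extensional (Box 0 (snd k))"
        using that(2) by (auto simp: pattern_def)
      then show ?thesis
        unfolding pattern_weight_def by (intro sum_prod_pmf_le_1) (simp_all add: that(1))
    qed
  qed (simp_all add: K_def)
  also have "\<dots> = real (n_cells * max_pattern_size L) * exp ((1 - \<epsilon>/4) * ln (real L))"
    by (simp add: K_def card_cartesian_product exp_minus field_simps)
  finally have "real (card U) \<le> real (n_cells * max_pattern_size L) * exp ((1 - \<epsilon>/4) * ln (real L))" .
  moreover have "card (recurrent_sites L \<omega>) \<le> card U + card {u \<in> Box 1 L. atypical L u \<omega>}"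
    by (rule order_trans[OF card_mono card_Un_le]) (auto simp: U_def recurrent_sites_def)
  ultimately show ?thesis by linarith
qed

section \<open>Atypical sites are rare and concentrated\<close>

definition large_box :: "nat \<Rightarrow> bool" where
  "large_box L \<longleftrightarrow> 2 \<le> L \<and> real CARD('d) * real (max_pattern_size L) / real L < min \<delta> 1"

definition atypical_bound :: "nat \<Rightarrow> real" where
  "atypical_bound L = 16 * Vmax / (Emin * \<epsilon>\<^sup>2 * ln (real L))"

lemma max_pattern_size_le:
  assumes "L \<ge> 1"
  shows "real (max_pattern_size L) \<le> ln (real L) / Emin + 2"
    "real (max_pattern_size L ^ CARD('d)) \<le> 2 ^ CARD('d) * (ln (real L) / Emin + 1)"
proof -
  define x where "x = ln (real L) / Emin"
  have x0: "x \<ge> 0" using assms Emin_pos by (simp add: x_def)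
  define a where "a = root CARD('d) x"
  have a0: "a \<ge> 0" using x0 by (simp add: a_def)
  have ax: "a ^ CARD('d) = x" using x0 by (simp add: a_def real_root_pow_pos2)
  have T: "real (max_pattern_size L) \<le> a + 1"
    using a0 by (simp add: max_pattern_size_def a_def x_def)
  have "a \<le> x + 1"
  proof (cases "a \<le> 1")
    case False
    then have "a ^ 1 \<le> a ^ CARD('d)" by (intro power_increasing) auto
    then show ?thesis using ax by simp
  qed (use x0 in simp)
  then show "real (max_pattern_size L) \<le> ln (real L) / Emin + 2" using T by (simp add: x_def)
  have "real (max_pattern_size L ^ CARD('d)) \<le> (a + 1) ^ CARD('d)" using T by (simp add: power_mono)
  also have "\<dots> \<le> 2 ^ CARD('d) * (x + 1)"
  proof (cases "a \<le> 1")
    case True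
    then have "(a + 1) ^ CARD('d) \<le> 2 ^ CARD('d)" using a0 by (intro power_mono) auto
    also have "\<dots> \<le> 2 ^ CARD('d) * (x + 1)" using x0 by simp
    finally show ?thesis .
  next
    case False
    then have "(a + 1) ^ CARD('d) \<le> (2 * a) ^ CARD('d)" using a0 by (intro power_mono) auto
    also have "\<dots> = 2 ^ CARD('d) * x" by (simp add: power_mult_distrib ax)
    also have "\<dots> \<le> 2 ^ CARD('d) * (x + 1)" by simp
    finally show ?thesis .
  qed
  finally show "real (max_pattern_size L ^ CARD('d)) \<le> 2 ^ CARD('d) * (ln (real L) / Emin + 1)"
    by (simp add: x_def)
qed

lemma radius_shift_close:
  fixes u j :: "int ^ 'd"
  assumes u: "u \<in> Box 1 L" and L: "large_box L" and j: "j \<in> Box 0 (pattern_size L u)"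
  shows "\<bar>radius L (u + j) - radius L u\<bar> < \<delta>" "radius L (u + j) \<in> {0..Rmax}"
proof -
  have L1: "L \<ge> 1" using L by (simp add: large_box_def)
  have "\<bar>j $ i\<bar> \<le> int (max_pattern_size L)" for i
  proof -
    have "0 \<le> j $ i" "j $ i \<le> int (pattern_size L u) - 1" using j by (auto simp: Box_def)
    then show ?thesis using pattern_size_less_max[OF u L1] by arith
  qed
  then have "lat_norm j \<le> real CARD('d) * real (max_pattern_size L)"
    using lat_norm_le[of j "int (max_pattern_size L)"] by simp
  then have "\<bar>lat_norm (u + j) - lat_norm u\<bar> / real L \<le> real CARD('d) * real (max_pattern_size L) / real L"
    using lat_norm_diff_le[of "u + j" u] by (intro divide_right_mono) auto
  moreover have "\<bar>radius L (u + j) - radius L u\<bar> = \<bar>lat_norm (u + j) - lat_norm u\<bar> / real L"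
    using L1 by (simp add: radius_def diff_divide_distrib[symmetric])
  moreover have "real CARD('d) * real (max_pattern_size L) / real L < min \<delta> 1"
    using L unfolding large_box_def by blast
  ultimately have d: "\<bar>radius L (u + j) - radius L u\<bar> < min \<delta> 1"
    by linarith
  then show "\<bar>radius L (u + j) - radius L u\<bar> < \<delta>" by simp
  show "radius L (u + j) \<in> {0..Rmax}"
    using d radius_le_card[OF u L1] Rmax radius_nonneg[of L "u + j"] by auto
qed

lemma prob_atypical_le:
  fixes u :: "int ^ 'd"
  assumes u: "u \<in> Box 1 L" and L: "large_box L"
  shows "measure (PiM UNIV site_law) {\<omega>\<in>space (PiM UNIV site_law). atypical L u \<omega>} \<le> atypical_bound L"
proof (cases "pattern_size L u = 0")
  case True
  have "ln (real L) > 0" using L by (simp add: large_box_def)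
  then show ?thesis using True Vmax_nonneg Emin_pos eps by (simp add: atypical_def atypical_bound_def)
next
  case False
  have L1: "L \<ge> 1" using L by (simp add: large_box_def)
  have cell: "\<delta>/2 * real (radius_cell L u) \<in> {0..Rmax}" "\<bar>\<delta>/2 * real (radius_cell L u) - radius L u\<bar> < \<delta>"
    using radius_cell_props[OF u L1] by auto
  have "measure (PiM UNIV site_law) {\<omega>\<in>space (PiM UNIV site_law). (1 - \<epsilon>/4) * ln (real L) <
            (\<Sum>j\<in>Box 0 (pattern_size L u). surprisal bos (cell_param L u) (\<omega> (L, u + j))) \<or>
            (\<exists>j\<in>Box 0 (pattern_size L u). \<not> occ_support bos (\<omega> (L, u + j)))}
        \<le> atypical_bound L"
    unfolding atypical_bound_def
  proof (rule prob_block_atypical_le[OF eps Emin_pos _ Vmax_nonneg])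
    show "Emin \<le> Ent bos \<beta> \<theta> \<mu> L u" by (rule Ent_ge_Emin[OF u L1])
    show "real (pattern_size L u) ^ CARD('d) * Ent bos \<beta> \<theta> \<mu> L u \<le> (1 - \<epsilon>) * ln (real L)"
      by (rule pattern_size_power_le[OF u L1])
    show "L \<ge> 2" using L by (simp add: large_box_def)
    fix j :: "int ^ 'd" assume j: "j \<in> Box 0 (pattern_size L u)"
    show "(ln (cell_param L u))\<^sup>2 * occ_sq_bound bos (lattice_param L (u + j)) \<le> Vmax"
      unfolding cell_param_def lattice_param_def by (rule Vmax_ge[OF cell(1) radius_shift_close(2)[OF u L j]])
    show "cross_entropy bos (lattice_param L (u + j)) (cell_param L u) \<le> Ent bos \<beta> \<theta> \<mu> L u + \<epsilon> * Emin / 4"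
      unfolding cell_param_def lattice_param_def Ent_eq_cross_entropy
      by (rule cross_entropy_close[OF radius_shift_close(2)[OF u L j] cell(1) radius_in_range[OF u L1]
          radius_shift_close(1)[OF u L j] cell(2)])
  qed
  then show ?thesis using False by (simp add: atypical_def)
qed

definition atypical_ind :: "nat \<Rightarrow> int ^ 'd \<Rightarrow> (nat \<times> (int ^ 'd) \<Rightarrow> nat) \<Rightarrow> real" where
  "atypical_ind L u \<omega> = (if atypical L u \<omega> then 1 else 0)"

definition residue_class :: "nat \<Rightarrow> int ^ 'd \<Rightarrow> int ^ 'd" where
  "residue_class L u = (\<chi> i. u $ i mod int (max_pattern_size L))"

definition pattern_sites :: "nat \<Rightarrow> int ^ 'd \<Rightarrow> (nat \<times> (int ^ 'd)) set" where
  "pattern_sites L u = (\<lambda>j. (L, u + j)) ` Box 0 (pattern_size L u)"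

lemma atypical_measurable [measurable]: "Measurable.pred (PiM UNIV site_law) (atypical L u)"
proof -
  have [measurable]: "finite (Box 0 (pattern_size L u))" by simp
  show ?thesis unfolding atypical_def by measurable
qed

lemma atypical_ind_measurable [measurable]: "atypical_ind L u \<in> borel_measurable (PiM UNIV site_law)"
  unfolding atypical_ind_def by measurable

lemma expectation_atypical_ind:
  "integral\<^sup>L (PiM UNIV site_law) (atypical_ind L u)
   = measure (PiM UNIV site_law) {\<omega>\<in>space (PiM UNIV site_law). atypical L u \<omega>}"
proof -
  have "integral\<^sup>L (PiM UNIV site_law) (atypical_ind L u)
      = integral\<^sup>L (PiM UNIV site_law) (indicator {\<omega>\<in>space (PiM UNIV site_law). atypical L u \<omega>})"
    by (intro Bochner_Integration.integral_cong) (auto simp: atypical_ind_def indicator_def)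
  also have "\<dots> = measure (PiM UNIV site_law) {\<omega>\<in>space (PiM UNIV site_law). atypical L u \<omega>}"
    using prob_space.finite_measure[OF prob_space_site_model]
    by (simp add: Bochner_Integration.integral_indicator Int_absorb2 finite_measure.emeasure_finite)
  finally show ?thesis .
qed

lemma atypical_restrict: "atypical L u (restrict \<omega> (pattern_sites L u)) = atypical L u \<omega>"
proof -
  have "restrict \<omega> (pattern_sites L u) (L, u + j) = \<omega> (L, u + j)"
    if "j \<in> Box 0 (pattern_size L u)" for j :: "int ^ 'd"
    using that by (simp add: pattern_sites_def)
  then show ?thesis unfolding atypical_def by (auto cong: sum.cong)
qed

lemma disjoint_family_on_pattern_sites:
  assumes L: "L \<ge> 1"
  shows "disjoint_family_on (pattern_sites L) {u \<in> Box 1 L. residue_class L u = C}"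
  unfolding disjoint_family_on_def
proof (intro ballI impI)
  fix u v
  assume u: "u \<in> {u \<in> Box 1 L. residue_class L u = C}" and v: "v \<in> {u \<in> Box 1 L. residue_class L u = C}"
    and "u \<noteq> v"
  then obtain i where i: "u $ i \<noteq> v $ i" by (auto simp: vec_eq_iff)
  have T: "pattern_size L u < max_pattern_size L" "pattern_size L v < max_pattern_size L"
    using pattern_size_less_max[OF _ L] u v by auto
  have "residue_class L u $ i = residue_class L v $ i" using u v by simp
  then have "int (max_pattern_size L) dvd (u $ i - v $ i)"
    by (simp add: residue_class_def mod_eq_dvd_iff)
  with i have far: "\<bar>u $ i - v $ i\<bar> \<ge> int (max_pattern_size L)"
    using dvd_imp_le_int[of "u $ i - v $ i" "int (max_pattern_size L)"] by simp
  show "pattern_sites L u \<inter> pattern_sites L v = {}"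
  proof (rule ccontr)
    assume "pattern_sites L u \<inter> pattern_sites L v \<noteq> {}"
    then obtain j k where j: "j \<in> Box 0 (pattern_size L u)" and k: "k \<in> Box 0 (pattern_size L v)"
      and e: "u + j = v + k"
      by (auto simp: pattern_sites_def)
    have "u $ i + j $ i = v $ i + k $ i" using arg_cong[OF e, of "\<lambda>x. x $ i"] by simp
    moreover have "0 \<le> j $ i" "j $ i < int (pattern_size L u)" "0 \<le> k $ i" "k $ i < int (pattern_size L v)"
      using j k by (auto simp: Box_def)
    ultimately show False using far T by arith
  qed
qed

lemma indep_atypical_ind_residue_class:
  assumes L: "L \<ge> 1"
  shows "prob_space.indep_vars (PiM UNIV site_law) (\<lambda>_. borel) (atypical_ind L) {u \<in> Box 1 L. residue_class L u = C}"
proof -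
  interpret P: prob_space "PiM UNIV (site_law :: nat \<times> (int ^ 'd) \<Rightarrow> nat measure)"
    by (rule prob_space_site_model)
  have restricted: "P.indep_vars (\<lambda>u. PiM (pattern_sites L u) site_law) (\<lambda>u \<omega>. restrict \<omega> (pattern_sites L u))
      {u \<in> Box 1 L. residue_class L u = C}"
    by (rule P.indep_vars_restrict[OF indep_vars_sites _ disjoint_family_on_pattern_sites[OF L]]) simp
  have "(\<lambda>x. if atypical L u x then 1 else (0::real)) \<in> borel_measurable (PiM (pattern_sites L u) site_law)" for u
  proof -
    have [measurable]: "(\<lambda>x. x (L, u + j)) \<in> measurable (PiM (pattern_sites L u) site_law) (count_space UNIV)"
      if "j \<in> Box 0 (pattern_size L u)" for j
      using that measurable_component_singleton[of "(L, u + j)" "pattern_sites L u" site_law]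
      by (simp add: site_law_def pattern_sites_def)
    have [measurable]: "finite (Box 0 (pattern_size L u))" by simp
    show ?thesis unfolding atypical_def by measurable
  qed
  from P.indep_vars_compose2[OF restricted this]
  show ?thesis
    by (rule P.indep_vars_cong[THEN iffD1, rotated 3]) (auto simp: atypical_ind_def atypical_restrict fun_eq_iff)
qed

definition atypical_excess :: "nat \<Rightarrow> (nat \<times> (int ^ 'd) \<Rightarrow> nat) \<Rightarrow> real" where
  "atypical_excess L \<omega> = (\<Sum>u\<in>Box 1 L. atypical_ind L u \<omega>)
     - (\<Sum>u\<in>Box 1 L. integral\<^sup>L (PiM UNIV site_law) (atypical_ind L u))"

lemma atypical_excess_measurable [measurable]: "atypical_excess L \<in> borel_measurable (PiM UNIV site_law)"
proof -
  have [measurable]: "finite (Box 1 L)" by simp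
  show ?thesis unfolding atypical_excess_def by measurable
qed

lemma card_residue_classes_le: "card (residue_class L ` Box 1 L) \<le> max_pattern_size L ^ CARD('d)"
proof -
  have T: "int (max_pattern_size L) > 0"
    unfolding of_nat_0_less_iff max_pattern_size_def by simp
  have "0 \<le> x mod int (max_pattern_size L)" "x mod int (max_pattern_size L) < int (max_pattern_size L)"
    for x :: int
    using T by simp_all
  then have "residue_class L ` Box 1 L \<subseteq> Box 0 (max_pattern_size L)"
    by (fastforce simp: residue_class_def Box_def)
  from card_mono[OF finite_Box this] show ?thesis by (simp add: card_Box)
qed

lemma prob_atypical_excess_ge:
  assumes L: "L \<ge> 1" and a: "a > 0"
  shows "measure (PiM UNIV site_law) {\<omega>\<in>space (PiM UNIV site_law). atypical_excess L \<omega> \<ge> a * real L ^ CARD('d)}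
    \<le> 2 ^ CARD('d) * (ln (real L) / Emin + 1) * exp (- 2 * a\<^sup>2 * real L / (2 ^ CARD('d) * (ln (real L) / Emin + 1))\<^sup>2)"
proof -
  interpret P: prob_space "PiM UNIV (site_law :: nat \<times> (int ^ 'd) \<Rightarrow> nat measure)"
    by (rule prob_space_site_model)
  define T where "T = real (max_pattern_size L ^ CARD('d))"
  define W where "W = 2 ^ CARD('d) * (ln (real L) / Emin + 1)"
  define X where "X = real L ^ CARD('d)"
  have T0: "T > 0" by (simp add: T_def max_pattern_size_def)
  have TW: "T \<le> W" using max_pattern_size_le(2)[OF L] by (simp add: T_def W_def)
  have X: "X \<ge> real L" "X > 0"
    using L by (simp_all add: X_def self_le_power)
  have aX: "a * X > 0" using a X by simp
  have classes: "real (card (residue_class L ` Box 1 L)) \<le> T"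
    using card_residue_classes_le[of L] by (simp add: T_def)
  have range: "atypical_ind L u \<omega> \<in> {0..1}" for u \<omega>
    by (simp add: atypical_ind_def)
  have "P.prob {\<omega>\<in>space (PiM UNIV site_law). atypical_excess L \<omega> \<ge> a * X}
      = P.prob {\<omega>\<in>space (PiM UNIV site_law). (\<Sum>u\<in>Box 1 L. atypical_ind L u \<omega>)
          \<ge> (\<Sum>u\<in>Box 1 L. P.expectation (atypical_ind L u)) + a * X}"
    by (rule arg_cong[where f = P.prob]) (auto simp: atypical_excess_def)
  also have "\<dots>
      \<le> real (card (residue_class L ` Box 1 L)) * exp (- 2 * (a * X / T)\<^sup>2 / real (card (Box (1::int^'d) L)))"
    by (rule P.prob_sum_ge_le_Hoeffding_classes[OF finite_Box indep_atypical_ind_residue_class[OF L]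
        range aX classes])
  also have "\<dots> \<le> W * exp (- 2 * a\<^sup>2 * real L / W\<^sup>2)"
  proof (rule mult_mono)
    have "2 * a\<^sup>2 * real L / W\<^sup>2 \<le> 2 * a\<^sup>2 * X / T\<^sup>2"
      using X T0 TW a by (intro frac_le mult_left_mono power_mono) auto
    also have "2 * a\<^sup>2 * X / T\<^sup>2 = 2 * (a * X / T)\<^sup>2 / real (card (Box (1::int^'d) L))"
      using X T0 by (simp add: card_Box X_def[symmetric] power2_eq_square)
    finally show "exp (- 2 * (a * X / T)\<^sup>2 / real (card (Box (1::int^'d) L))) \<le> exp (- 2 * a\<^sup>2 * real L / W\<^sup>2)"
      by simp
  qed (use classes TW in auto)
  finally show ?thesis by (simp add: X_def W_def)
qed

lemma AE_eventually_atypical_excess_less: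
  assumes "a > 0"
  shows "AE \<omega> in PiM UNIV site_law. eventually (\<lambda>L. atypical_excess L \<omega> < a * real L ^ CARD('d)) sequentially"
proof -
  interpret P: prob_space "PiM UNIV (site_law :: nat \<times> (int ^ 'd) \<Rightarrow> nat measure)"
    by (rule prob_space_site_model)
  define A where "A L = (if L \<ge> 1 then {\<omega>\<in>space (PiM UNIV site_law). atypical_excess L \<omega> \<ge> a * real L ^ CARD('d)} else {})" for L
  have [measurable]: "A L \<in> P.events" for L
    by (simp add: A_def)
  define W where "W x = 2 ^ CARD('d) * (ln x / Emin + 1)" for x :: real
  have "((\<lambda>x::real. x^2 * (W x * exp (- 2 * a^2 * x / (W x)^2))) \<longlongrightarrow> 0) at_top"
    unfolding W_def using Emin_pos \<open>a > 0\<close> by real_asymp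
  then have "((\<lambda>L. real L ^ 2 * (W (real L) * exp (- 2 * a^2 * real L / (W (real L))^2))) \<longlongrightarrow> 0) sequentially"
    by (rule filterlim_compose[OF _ filterlim_real_sequentially])
  then have "eventually (\<lambda>L. real L ^ 2 * (W (real L) * exp (- 2 * a^2 * real L / (W (real L))^2)) < 1) sequentially"
    by (intro order_tendstoD(2)) auto
  then have "eventually (\<lambda>L. norm (measure (PiM UNIV site_law) (A L)) \<le> inverse (real L ^ 2)) sequentially"
    using eventually_ge_at_top[of 1]
  proof eventually_elim
    case (elim L)
    have "measure (PiM UNIV site_law) (A L) \<le> W (real L) * exp (- 2 * a^2 * real L / (W (real L))^2)"
      using prob_atypical_excess_ge[OF elim(2) \<open>a > 0\<close>] elim(2) by (simp add: A_def W_def)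
    also have "\<dots> \<le> inverse (real L ^ 2)"
      using elim by (simp add: field_simps)
    finally show ?case by simp
  qed
  then have "summable (\<lambda>L. measure (PiM UNIV site_law) (A L))"
    by (rule summable_comparison_test_ev) (simp add: inverse_power_summable)
  then have "AE \<omega> in PiM UNIV site_law. eventually (\<lambda>L. \<omega> \<in> space (PiM UNIV site_law) - A L) sequentially"
    by (intro borel_cantelli_AE1) (simp_all add: P.emeasure_finite less_top[symmetric])
  then show ?thesis
  proof (rule eventually_mono)
    fix \<omega> assume "eventually (\<lambda>L. \<omega> \<in> space (PiM UNIV site_law) - A L) sequentially"
    then show "eventually (\<lambda>L. atypical_excess L \<omega> < a * real L ^ CARD('d)) sequentially"
      using eventually_ge_at_top[of 1] by eventually_elim (auto simp: A_def not_le)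
  qed
qed

lemma recurrent_density_le:
  assumes L: "large_box L"
  shows "real (card (recurrent_sites L \<omega>)) / real L ^ CARD('d)
    \<le> real (n_cells * max_pattern_size L) * exp ((1 - \<epsilon>/4) * ln (real L)) / real L ^ CARD('d)
      + atypical_bound L + atypical_excess L \<omega> / real L ^ CARD('d)"
proof -
  have L1: "L \<ge> 1" using L by (simp add: large_box_def)
  have X: "real L ^ CARD('d) > 0" using L1 by simp
  have "real (card {u \<in> Box 1 L. atypical L u \<omega>}) = (\<Sum>u\<in>Box 1 L. atypical_ind L u \<omega>)"
    by (simp add: atypical_ind_def sum.If_cases Int_def)
  also have "\<dots> \<le> real L ^ CARD('d) * atypical_bound L + atypical_excess L \<omega>"
  proof -
    have "(\<Sum>u\<in>Box 1 L. integral\<^sup>L (PiM UNIV site_law) (atypical_ind L u)) \<le> (\<Sum>u\<in>Box (1::int^'d) L. atypical_bound L)"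
      by (rule sum_mono) (simp add: expectation_atypical_ind prob_atypical_le[OF _ L])
    then show ?thesis by (simp add: atypical_excess_def card_Box)
  qed
  finally have "real (card (recurrent_sites L \<omega>))
      \<le> real (n_cells * max_pattern_size L) * exp ((1 - \<epsilon>/4) * ln (real L))
        + real L ^ CARD('d) * atypical_bound L + atypical_excess L \<omega>"
    using card_recurrent_sites_le[of L \<omega>] L by (simp add: large_box_def)
  then have "real (card (recurrent_sites L \<omega>)) / real L ^ CARD('d)
      \<le> (real (n_cells * max_pattern_size L) * exp ((1 - \<epsilon>/4) * ln (real L))
        + real L ^ CARD('d) * atypical_bound L + atypical_excess L \<omega>) / real L ^ CARD('d)"
    using X by (intro divide_right_mono) auto
  also have "\<dots> = real (n_cells * max_pattern_size L) * exp ((1 - \<epsilon>/4) * ln (real L)) / real L ^ CARD('d)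
      + atypical_bound L + atypical_excess L \<omega> / real L ^ CARD('d)"
    using X by (simp add: add_divide_distrib)
  finally show ?thesis .
qed

lemma eventually_large_box: "eventually large_box sequentially"
proof -
  have "((\<lambda>x::real. real CARD('d) * (ln x / Emin + 2) / x) \<longlongrightarrow> 0) at_top"
    using Emin_pos by real_asymp
  then have "((\<lambda>L. real CARD('d) * (ln (real L) / Emin + 2) / real L) \<longlongrightarrow> 0) sequentially"
    by (rule filterlim_compose[OF _ filterlim_real_sequentially])
  then have "eventually (\<lambda>L. real CARD('d) * (ln (real L) / Emin + 2) / real L < min \<delta> 1) sequentially"
    using delta_pos by (intro order_tendstoD(2)) auto
  then show ?thesis
    using eventually_ge_at_top[of 2]
  proof eventually_elim
    case (elim L)
    then have "real CARD('d) * real (max_pattern_size L) / real L \<le> real CARD('d) * (ln (real L) / Emin + 2) / real L"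
      using max_pattern_size_le(1)[of L] by (intro divide_right_mono mult_left_mono) auto
    then have "real CARD('d) * real (max_pattern_size L) / real L < min \<delta> 1"
      using elim(1) by linarith
    then show ?case using elim(2) unfolding large_box_def by blast
  qed
qed

lemma typical_density_tendsto_zero:
  "((\<lambda>L. real (n_cells * max_pattern_size L) * exp ((1 - \<epsilon>/4) * ln (real L)) / real L ^ CARD('d))
     \<longlongrightarrow> 0) sequentially"
proof (rule tendsto_sandwich[OF _ _ tendsto_const])
  have "((\<lambda>x::real. real n_cells * (ln x / Emin + 2) * exp ((1 - \<epsilon>/4) * ln x) / x) \<longlongrightarrow> 0) at_top"
    using Emin_pos eps by real_asymp
  then show "((\<lambda>L. real n_cells * (ln (real L) / Emin + 2) * exp ((1 - \<epsilon>/4) * ln (real L)) / real L) \<longlongrightarrow> 0) sequentially"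
    by (rule filterlim_compose[OF _ filterlim_real_sequentially])
  show "eventually (\<lambda>L. real (n_cells * max_pattern_size L) * exp ((1 - \<epsilon>/4) * ln (real L)) / real L ^ CARD('d)
      \<le> real n_cells * (ln (real L) / Emin + 2) * exp ((1 - \<epsilon>/4) * ln (real L)) / real L) sequentially"
    using eventually_ge_at_top[of 1]
  proof eventually_elim
    case (elim L)
    have "real (n_cells * max_pattern_size L) * exp ((1 - \<epsilon>/4) * ln (real L)) / real L ^ CARD('d)
        \<le> real (n_cells * max_pattern_size L) * exp ((1 - \<epsilon>/4) * ln (real L)) / real L"
      using elim by (intro divide_left_mono) (auto simp: self_le_power)
    also have "\<dots> \<le> real n_cells * (ln (real L) / Emin + 2) * exp ((1 - \<epsilon>/4) * ln (real L)) / real L"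
      using max_pattern_size_le(1)[OF elim] by (intro divide_right_mono mult_right_mono) (auto intro: mult_left_mono)
    finally show ?case .
  qed
qed (simp add: eventually_sequentially)

lemma atypical_bound_tendsto_zero: "(atypical_bound \<longlongrightarrow> 0) sequentially"
proof -
  have "((\<lambda>x::real. 16 * Vmax / (Emin * \<epsilon>\<^sup>2 * ln x)) \<longlongrightarrow> 0) at_top"
    using Emin_pos eps by real_asymp
  then show ?thesis
    unfolding atypical_bound_def by (rule filterlim_compose[OF _ filterlim_real_sequentially])
qed

lemma recurrent_density_tendsto_zero:
  assumes excess: "\<forall>k::nat. eventually (\<lambda>L. atypical_excess L \<omega> < inverse (real (Suc k)) * real L ^ CARD('d)) sequentially"
  shows "((\<lambda>L. real (card (recurrent_sites L \<omega>)) / real L ^ CARD('d)) \<longlongrightarrow> 0) sequentially"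
  unfolding tendsto_iff
proof (intro allI impI)
  fix e :: real assume e: "e > 0"
  then obtain k where k: "inverse (real (Suc k)) < e/3"
    using reals_Archimedean[of "e/3"] by auto
  have e3: "e/3 > 0" using e by simp
  show "eventually (\<lambda>L. dist (real (card (recurrent_sites L \<omega>)) / real L ^ CARD('d)) 0 < e) sequentially"
    using eventually_large_box excess[rule_format, of k]
      order_tendstoD(2)[OF typical_density_tendsto_zero e3] order_tendstoD(2)[OF atypical_bound_tendsto_zero e3]
  proof eventually_elim
    case (elim L)
    then have X: "real L ^ CARD('d) > 0" by (simp add: large_box_def)
    then have "atypical_excess L \<omega> / real L ^ CARD('d) < inverse (real (Suc k))"
      using elim(2) by (simp add: pos_divide_less_eq)
    then have "real (card (recurrent_sites L \<omega>)) / real L ^ CARD('d) < e"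
      using recurrent_density_le[OF elim(1), of \<omega>] elim(3,4) k by linarith
    then show ?case using X by (simp add: dist_real_def)
  qed
qed

lemma AE_recurrent_density_tendsto_zero:
  "AE \<omega> in PiM UNIV site_law. ((\<lambda>L. real (card (recurrent_sites L \<omega>)) / real L ^ CARD('d)) \<longlongrightarrow> 0) sequentially"
proof -
  have "AE \<omega> in PiM UNIV site_law. \<forall>k::nat.
      eventually (\<lambda>L. atypical_excess L \<omega> < inverse (real (Suc k)) * real L ^ CARD('d)) sequentially"
    unfolding AE_all_countable by (intro allI AE_eventually_atypical_excess_less) simp
  then show ?thesis
    by (rule eventually_mono) (rule recurrent_density_tendsto_zero)
qed

end

context occupation_model
begin

lemma not_Rrec_le_if_eps_ge_1:
  fixes u :: "int ^ 'd"
  assumes "\<epsilon> \<ge> 1"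
  shows "\<not> Rrec L u k \<le> ereal (root CARD('d) (ln (real L) * (1 - \<epsilon>) / Ent bos \<beta> \<theta> \<mu> L u))"
proof
  assume "Rrec L u k \<le> ereal (root CARD('d) (ln (real L) * (1 - \<epsilon>) / Ent bos \<beta> \<theta> \<mu> L u))"
  then have root: "1 \<le> root CARD('d) (ln (real L) * (1 - \<epsilon>) / Ent bos \<beta> \<theta> \<mu> L u)"
    by (rule Rrec_le_imp_unique_pattern(1))
  have "Ent bos \<beta> \<theta> \<mu> L u \<ge> 0"
    using cross_entropy_pos[OF occ_param_lattice_param[of L u]] by (simp add: Ent_eq_cross_entropy)
  moreover have "ln (real L) \<ge> 0" by (cases "L = 0") auto
  ultimately have "ln (real L) * (1 - \<epsilon>) / Ent bos \<beta> \<theta> \<mu> L u \<le> 0"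
    using assms by (intro divide_nonpos_nonneg mult_nonneg_nonpos) auto
  with root show False by simp
qed

lemma AE_recurrent_density_tendsto_zero_if_eps_less_1:
  assumes "0 < \<epsilon>" "\<epsilon> < 1"
  shows "AE \<omega> in (PiM UNIV site_law :: (nat \<times> (int ^ 'd) \<Rightarrow> nat) measure).
    (\<lambda>L. real (card {u \<in> Box 1 L. Rrec L u (\<lambda>n. \<omega> (L, n))
        \<le> ereal (root CARD('d) (ln (real L) * (1 - \<epsilon>) / Ent bos \<beta> \<theta> \<mu> L u))}) / real L ^ CARD('d)) \<longlonglongrightarrow> 0"
proof -
  define Rmax where "Rmax = 2 * real CARD('d) + 1"
  obtain Emin where Emin: "Emin > 0" "\<And>r. r \<in> {0..Rmax} \<Longrightarrow> Emin \<le> cross_entropy bos (site_param r) (site_param r)"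
    using cross_entropy_site_param_lower_bound[of Rmax] by (auto simp: Rmax_def)
  obtain Vmax where Vmax: "Vmax \<ge> 0" "\<And>r1 r2. r1 \<in> {0..Rmax} \<Longrightarrow> r2 \<in> {0..Rmax} \<Longrightarrow>
      (ln (site_param r1))\<^sup>2 * occ_sq_bound bos (site_param r2) \<le> Vmax"
    using sq_bound_site_param_upper_bound[of Rmax] by blast
  obtain \<delta> where \<delta>: "\<delta> > 0" "\<And>r1 r2 r. r1 \<in> {0..Rmax} \<Longrightarrow> r2 \<in> {0..Rmax} \<Longrightarrow> r \<in> {0..Rmax} \<Longrightarrow>
      \<bar>r1 - r\<bar> < \<delta> \<Longrightarrow> \<bar>r2 - r\<bar> < \<delta> \<Longrightarrow>
      cross_entropy bos (site_param r1) (site_param r2) \<le> cross_entropy bos (site_param r) (site_param r) + \<epsilon> * Emin / 4"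
    using cross_entropy_site_param_uniform_continuity[of "\<epsilon> * Emin / 4" Rmax] assms Emin(1) by auto
  interpret entropy_bounds bos \<beta> \<mu> \<theta> "TYPE('d)" \<epsilon> Emin Vmax \<delta> Rmax
    by unfold_locales (use assms Emin Vmax \<delta> in \<open>auto simp: Rmax_def\<close>)
  show ?thesis
    using AE_recurrent_density_tendsto_zero by (simp add: recurrent_sites_def pattern_bound_def)
qed

end

theorem lemma1:
  fixes \<theta> :: "real \<Rightarrow> real" and \<beta> \<mu> \<epsilon> :: real and bos :: bool
  assumes "\<beta> > 0"
    and "continuous_on {0..} \<theta>"
    and "\<forall>x\<ge>0. \<theta> x \<ge> 0"
    and "\<forall>x>0. \<theta> x > 0"
    and "bos \<Longrightarrow> \<mu> > 0"
    and "(\<integral>\<^sup>+ y. ennreal (hdens bos \<beta> \<theta> \<mu> (norm (y :: real ^ 'd))) \<partial>lborel) < \<infinity>"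
    and "\<epsilon> > 0"
  shows "AE \<omega> in (Pmodel bos \<beta> \<theta> \<mu> :: (nat \<times> (int ^ 'd) \<Rightarrow> nat) measure).
           (\<lambda>L. real (card {u \<in> Box 1 L.
                   Rrec L u (\<lambda>n. \<omega> (L, n))
                     \<le> ereal (root CARD('d) (ln (real L) * (1 - \<epsilon>) / Ent bos \<beta> \<theta> \<mu> L u))})
                 / real L ^ CARD('d)) \<longlonglongrightarrow> 0"
proof -
  interpret occupation_model bos \<beta> \<mu> \<theta>
    using assms(1-3,5) by unfold_locales auto
  show ?thesis
  proof (cases "\<epsilon> < 1")
    case True
    with assms(7) show ?thesis
      unfolding Pmodel_eq_PiM_site_law by (rule AE_recurrent_density_tendsto_zero_if_eps_less_1)
  next
    case False
    then show ?thesis by (simp add: not_Rrec_le_if_eps_ge_1)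
  qed
qed

end
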